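(* Let $\lambda>0$ not be a fusion value, let $\lambda_1$ and $C_1,\dots,C_K$ be as in the context, and let $(\hat{\mathbf x}_1,\dots,\hat{\mathbf x}_K)$ be the minimizer of (R$_\lambda$). Assume vectors $\boldsymbol\delta'_{ij}\in\mathbb R^d$ are given for all $i<j$ lying in a common cluster $C_k$, with $\|\boldsymbol\delta'_{ij}\|\le\lambda_1$ and $\mathbf a_i-\bar{\mathbf a}_k=-\sum_{j\in C_k}r_j\boldsymbol\delta'_{\langle ij\rangle}$ for all $i\in C_k$, $k\in[K]$. Define: $\mathbf x^*_i:=\hat{\mathbf x}_k$ for $i\in C_k$; $\mathbf y_{ij}:=\mathbf x_i^*-\mathbf x_j^*$; $\mathbf z_i:=\mathbf x_i^*-\mathbf a_i$; $s_i:=\frac12(1+\|\mathbf z_i\|^2)$; $u_i:=\frac12(-1+\|\mathbf z_i\|^2)$; $t_{ij}:=\|\mathbf y_{ij}\|$; $\boldsymbol\delta_{ij}:=\boldsymbol\delta'_{ij}$ if $i,j$ lie in the same cluster and $\boldsymbol\delta_{ij}:=\lambda\frac{\mathbf x_j^*-\mathbf x_i^*}{\|\mathbf x_j^*-\mathbf x_i^*\|}$ otherwise; $\boldsymbol\beta_i:=-\mathbf z_i$; $\gamma_i:=\frac12(1-\|\boldsymbol\beta_i\|^2)$. Then this is an optimal primal–dual pair for (P-SOCP)/(D-SOCP) at $\lambda$.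
   Context: Data: $n\ge2$, $d\ge1$, $\mathbf a_i\in\mathbb R^d$, $r_i>0$. For $\lambda\ge0$, (P$_\lambda$): minimize $\frac12\sum_ir_i\|\mathbf x_i-\mathbf a_i\|^2+\lambda\sum_{i<j}r_ir_j\|\mathbf x_i-\mathbf x_j\|$; unique minimizer $\mathbf x^*(\lambda)$, whose clusters are the classes of $i\sim j\iff\mathbf x_i^*(\lambda)=\mathbf x_j^*(\lambda)$. $\lambda_0>0$ is a fusion value if some $i\ne j$ have $\mathbf x_i^*(\lambda_0)=\mathbf x_j^*(\lambda_0)$ but $\mathbf x_i^*(\lambda)\ne\mathbf x_j^*(\lambda)$ for all $\lambda<\lambda_0$. $\lambda_1$ is the largest fusion value below $\lambda$ (or $0$), and $C_1,\dots,C_K$ are the clusters of $\mathbf x^*(\lambda_1)$ (singletons if $\lambda_1=0$). $r'_k:=\sum_{i\in C_k}r_i$, $\bar{\mathbf a}_k:=\frac1{r'_k}\sum_{i\in C_k}r_i\mathbf a_i$; (R$_\lambda$): minimize $\frac12\sum_kr'_k\|\mathbf x_k-\bar{\mathbf a}_k\|^2+\lambda\sum_{k<k'}r'_kr'_{k'}\|\mathbf x_k-\mathbf x_{k'}\|$ over $(\mathbb R^d)^K$. Antisymmetric notation $\mathbf v_{\langle ij\rangle}=\mathbf v_{ij}$ ($i<j$), $-\mathbf v_{ji}$ ($i>j$), $\mathbf 0$ ($i=j$). (P-SOCP): minimize $\sum_ir_is_i+\lambda\sum_{i<j}r_ir_jt_{ij}$ s.t. $\mathbf y_{ij}=\mathbf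 x_i-\mathbf x_j$, $\mathbf z_i=\mathbf x_i-\mathbf a_i$, $s_i=u_i+1$, $t_{ij}\ge\|\mathbf y_{ij}\|$, $s_i\ge\|(\mathbf z_i,u_i)\|$. (D-SOCP): maximize $\sum_ir_i\mathbf a_i^T\boldsymbol\beta_i+\sum_ir_i\gamma_i$ s.t. $\sum_jr_j\boldsymbol\delta_{\langle ij\rangle}+\boldsymbol\beta_i=\mathbf 0$, $\|\boldsymbol\delta_{ij}\|\le\lambda$, $1-\gamma_i\ge\|(\boldsymbol\beta_i,\gamma_i)\|$. *)

theory Defs
  imports "HOL-Analysis.Analysis"
begin

text \<open>Points are indexed by 0..n-1; vectors live in an arbitrary Euclidean space 'a
  (of dimension d = DIM('a) \<ge> 1).\<close>

definition Pobj :: "nat \<Rightarrow> (nat \<Rightarrow> real) \<Rightarrow> (nat \<Rightarrow> 'a::euclidean_space) \<Rightarrow> real \<Rightarrow> (nat \<Rightarrow> 'a) \<Rightarrow> real" where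
  "Pobj n r a lam x =
     (1/2) * (\<Sum>i<n. r i * (norm (x i - a i))\<^sup>2)
     + lam * (\<Sum>i<n. \<Sum>j\<in>{i<..<n}. r i * r j * norm (x i - x j))"

text \<open>The (unique) minimizer of (P_lambda); values at indices \<ge> n are normalised to 0.\<close>
definition xstar :: "nat \<Rightarrow> (nat \<Rightarrow> real) \<Rightarrow> (nat \<Rightarrow> 'a::euclidean_space) \<Rightarrow> real \<Rightarrow> (nat \<Rightarrow> 'a)" where
  "xstar n r a lam = (THE x. (\<forall>i\<ge>n. x i = 0) \<and>
      (\<forall>y. (\<forall>i\<ge>n. y i = 0) \<longrightarrow> Pobj n r a lam x \<le> Pobj n r a lam y))"

definition fusion_value :: "nat \<Rightarrow> (nat \<Rightarrow> real) \<Rightarrow> (nat \<Rightarrow> 'a::euclidean_space) \<Rightarrow> real \<Rightarrow> bool" where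
  "fusion_value n r a lam0 \<longleftrightarrow> lam0 > 0 \<and>
     (\<exists>i<n. \<exists>j<n. i \<noteq> j \<and> xstar n r a lam0 i = xstar n r a lam0 j \<and>
        (\<forall>lam. 0 \<le> lam \<and> lam < lam0 \<longrightarrow> xstar n r a lam i \<noteq> xstar n r a lam j))"

definition lam1 :: "nat \<Rightarrow> (nat \<Rightarrow> real) \<Rightarrow> (nat \<Rightarrow> 'a::euclidean_space) \<Rightarrow> real \<Rightarrow> real" where
  "lam1 n r a lam = (if {mu. fusion_value n r a mu \<and> mu < lam} = {} then 0
                     else Max {mu. fusion_value n r a mu \<and> mu < lam})"

text \<open>Clusters of x*(mu); singletons if mu = 0 (convention of the paper).\<close>
definition clusters :: "nat \<Rightarrow> (nat \<Rightarrow> real) \<Rightarrow> (nat \<Rightarrow> 'a::euclidean_space) \<Rightarrow> real \<Rightarrow> nat set set" where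
  "clusters n r a mu = (if mu = 0 then (\<lambda>i. {i}) ` {..<n}
     else {..<n} // {(i, j). i < n \<and> j < n \<and> xstar n r a mu i = xstar n r a mu j})"

definition rprime :: "(nat \<Rightarrow> real) \<Rightarrow> nat set \<Rightarrow> real" where
  "rprime r C = (\<Sum>i\<in>C. r i)"

definition abar :: "(nat \<Rightarrow> real) \<Rightarrow> (nat \<Rightarrow> 'a::euclidean_space) \<Rightarrow> nat set \<Rightarrow> 'a" where
  "abar r a C = (1 / rprime r C) *\<^sub>R (\<Sum>i\<in>C. r i *\<^sub>R a i)"

definition Robj :: "(nat \<Rightarrow> real) \<Rightarrow> (nat \<Rightarrow> 'a::euclidean_space) \<Rightarrow> (nat \<Rightarrow> nat set) \<Rightarrow> nat \<Rightarrow> real \<Rightarrow> (nat \<Rightarrow> 'a) \<Rightarrow> real" where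
  "Robj r a C K lam x =
     (1/2) * (\<Sum>k<K. rprime r (C k) * (norm (x k - abar r a (C k)))\<^sup>2)
     + lam * (\<Sum>k<K. \<Sum>k'\<in>{k<..<K}. rprime r (C k) * rprime r (C k') * norm (x k - x k'))"

definition anti :: "(nat \<Rightarrow> nat \<Rightarrow> 'a::real_vector) \<Rightarrow> nat \<Rightarrow> nat \<Rightarrow> 'a" where
  "anti v i j = (if i < j then v i j else if j < i then - v j i else 0)"

definition psocp_feasible :: "nat \<Rightarrow> (nat \<Rightarrow> 'a::euclidean_space) \<Rightarrow> (nat \<Rightarrow> 'a) \<Rightarrow> (nat \<Rightarrow> nat \<Rightarrow> 'a)
    \<Rightarrow> (nat \<Rightarrow> 'a) \<Rightarrow> (nat \<Rightarrow> real) \<Rightarrow> (nat \<Rightarrow> real) \<Rightarrow> (nat \<Rightarrow> nat \<Rightarrow> real) \<Rightarrow> bool" where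
  "psocp_feasible n a x y z s u t \<longleftrightarrow>
     (\<forall>i<n. \<forall>j<n. i < j \<longrightarrow> y i j = x i - x j \<and> t i j \<ge> norm (y i j)) \<and>
     (\<forall>i<n. z i = x i - a i \<and> s i = u i + 1 \<and> s i \<ge> norm (z i, u i))"

definition psocp_obj :: "nat \<Rightarrow> (nat \<Rightarrow> real) \<Rightarrow> real \<Rightarrow> (nat \<Rightarrow> real) \<Rightarrow> (nat \<Rightarrow> nat \<Rightarrow> real) \<Rightarrow> real" where
  "psocp_obj n r lam s t = (\<Sum>i<n. r i * s i) + lam * (\<Sum>i<n. \<Sum>j\<in>{i<..<n}. r i * r j * t i j)"

definition psocp_optimal :: "nat \<Rightarrow> (nat \<Rightarrow> real) \<Rightarrow> (nat \<Rightarrow> 'a::euclidean_space) \<Rightarrow> real \<Rightarrow> (nat \<Rightarrow> 'a) \<Rightarrow> (nat \<Rightarrow> nat \<Rightarrow> 'a)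
    \<Rightarrow> (nat \<Rightarrow> 'a) \<Rightarrow> (nat \<Rightarrow> real) \<Rightarrow> (nat \<Rightarrow> real) \<Rightarrow> (nat \<Rightarrow> nat \<Rightarrow> real) \<Rightarrow> bool" where
  "psocp_optimal n r a lam x y z s u t \<longleftrightarrow> psocp_feasible n a x y z s u t \<and>
     (\<forall>x' y' z' s' u' t'. psocp_feasible n a x' y' z' s' u' t' \<longrightarrow>
        psocp_obj n r lam s t \<le> psocp_obj n r lam s' t')"

definition dsocp_feasible :: "nat \<Rightarrow> (nat \<Rightarrow> real) \<Rightarrow> real \<Rightarrow> (nat \<Rightarrow> nat \<Rightarrow> 'a::euclidean_space)
    \<Rightarrow> (nat \<Rightarrow> 'a) \<Rightarrow> (nat \<Rightarrow> real) \<Rightarrow> bool" where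
  "dsocp_feasible n r lam delta beta gamma \<longleftrightarrow>
     (\<forall>i<n. (\<Sum>j<n. r j *\<^sub>R anti delta i j) + beta i = 0) \<and>
     (\<forall>i<n. \<forall>j<n. i < j \<longrightarrow> norm (delta i j) \<le> lam) \<and>
     (\<forall>i<n. 1 - gamma i \<ge> norm (beta i, gamma i))"

definition dsocp_obj :: "nat \<Rightarrow> (nat \<Rightarrow> real) \<Rightarrow> (nat \<Rightarrow> 'a::euclidean_space) \<Rightarrow> (nat \<Rightarrow> 'a) \<Rightarrow> (nat \<Rightarrow> real) \<Rightarrow> real" where
  "dsocp_obj n r a beta gamma = (\<Sum>i<n. r i * (a i \<bullet> beta i)) + (\<Sum>i<n. r i * gamma i)"

definition dsocp_optimal :: "nat \<Rightarrow> (nat \<Rightarrow> real) \<Rightarrow> (nat \<Rightarrow> 'a::euclidean_space) \<Rightarrow> real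
    \<Rightarrow> (nat \<Rightarrow> nat \<Rightarrow> 'a) \<Rightarrow> (nat \<Rightarrow> 'a) \<Rightarrow> (nat \<Rightarrow> real) \<Rightarrow> bool" where
  "dsocp_optimal n r a lam delta beta gamma \<longleftrightarrow> dsocp_feasible n r lam delta beta gamma \<and>
     (\<forall>delta' beta' gamma'. dsocp_feasible n r lam delta' beta' gamma' \<longrightarrow>
        dsocp_obj n r a beta' gamma' \<le> dsocp_obj n r a beta gamma)"

end

theory Submission
  imports Defs
begin

text \<open>
  Call \<open>(d, x)\<close> a certificate of (P$_\mu$) if it satisfies the KKT conditions, with \<open>d\<close> playing
  the role of \<open>\<delta>\<close>. A certificate makes \<open>x\<close> the (strongly convex) minimizer, and certificates exist:
  maximize the Lagrange dual over the compact box \<open>\<parallel>d\<^sub>i\<^sub>j\<parallel> \<le> \<mu>\<close>. Certificates of the problem on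
  cluster means lift, through within-cluster duals, to certificates of the full problem; applied to
  the level sets of \<open>x*(\<mu>)\<close> this shows that fused points stay fused as \<open>\<mu>\<close> grows. Hence, when
  \<open>\<lambda>\<close> is not a fusion value, two points fused at \<open>\<lambda>\<close> were fused at \<open>\<lambda>\<^sub>1\<close> (or carry equal data
  when \<open>\<lambda>\<^sub>1 = 0\<close>), so clusters whose reduced solutions coincide have equal means. Then the duals
  between coinciding reduced points cancel, the aligned duals \<open>\<lambda> (x\<^sub>j - x\<^sub>i) / \<parallel>x\<^sub>j - x\<^sub>i\<parallel>\<close>
  across clusters together with \<open>\<delta>'\<close> within clusters certify \<open>x*\<close>, and every certificate
  yields an SOCP primal--dual pair without duality gap, optimal by weak duality.
\<close>

section \<open>Optimality certificates\<close>

lemma anti_swap: "anti v j i = - anti v i j"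
  by (auto simp: anti_def)

lemma anti_same [simp]: "anti v i i = 0"
  by (simp add: anti_def)

definition pair_penalty :: "nat \<Rightarrow> (nat \<Rightarrow> real) \<Rightarrow> (nat \<Rightarrow> 'a::real_normed_vector) \<Rightarrow> real" where
  "pair_penalty n r x = (\<Sum>i<n. \<Sum>j\<in>{i<..<n}. r i * r j * norm (x i - x j))"

definition flow :: "nat \<Rightarrow> (nat \<Rightarrow> real) \<Rightarrow> (nat \<Rightarrow> nat \<Rightarrow> 'a::real_vector) \<Rightarrow> nat \<Rightarrow> 'a" where
  "flow n r d i = (\<Sum>j<n. r j *\<^sub>R anti d i j)"

text \<open>The KKT system of (P$_\mu$): \<open>d i j\<close> is a subgradient of \<open>\<mu> \<parallel>\<sqdot>\<parallel>\<close> at \<open>x j - x i\<close>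
  (the dual variable \<open>\<delta>\<^sub>i\<^sub>j\<close> of the paper), and \<open>x\<close> is stationary.\<close>
definition certificate ::
    "nat \<Rightarrow> (nat \<Rightarrow> real) \<Rightarrow> (nat \<Rightarrow> 'a::real_inner) \<Rightarrow> real \<Rightarrow> (nat \<Rightarrow> nat \<Rightarrow> 'a) \<Rightarrow> (nat \<Rightarrow> 'a) \<Rightarrow> bool" where
  "certificate n r a \<mu> d x \<longleftrightarrow>
     (\<forall>i<n. \<forall>j<n. i < j \<longrightarrow> norm (d i j) \<le> \<mu> \<and> \<mu> * norm (x j - x i) \<le> d i j \<bullet> (x j - x i)) \<and>
     (\<forall>i<n. x i - a i = flow n r d i)"

definition aligned_dual :: "real \<Rightarrow> (nat \<Rightarrow> 'a::real_normed_vector) \<Rightarrow> nat \<Rightarrow> nat \<Rightarrow> 'a" where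
  "aligned_dual \<mu> x i j = (\<mu> / norm (x j - x i)) *\<^sub>R (x j - x i)"

lemma aligned_dual_swap: "aligned_dual \<mu> x j i = - aligned_dual \<mu> x i j"
  by (simp add: aligned_dual_def norm_minus_commute scaleR_diff_right)

lemma aligned_dual_eq_0: "x i = x j \<Longrightarrow> aligned_dual \<mu> x i j = 0"
  by (simp add: aligned_dual_def)

lemma norm_aligned_dual_le: "\<mu> \<ge> 0 \<Longrightarrow> norm (aligned_dual \<mu> x i j) \<le> \<mu>"
  by (cases "x j = x i") (simp_all add: aligned_dual_def)

lemma aligned_dual_inner:
  "aligned_dual \<mu> x i j \<bullet> (x j - x i) = \<mu> * norm (x j - (x i :: 'a::real_inner))"
  by (cases "x j = x i") (simp_all add: aligned_dual_def power2_norm_eq_inner[symmetric] power2_eq_square)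

lemma Pobj_eq: "Pobj n r a \<mu> x = (1/2) * (\<Sum>i<n. r i * (norm (x i - a i))\<^sup>2) + \<mu> * pair_penalty n r x"
  by (simp add: Pobj_def pair_penalty_def)

lemma pair_penalty_nonneg: "\<forall>i<n. r i > 0 \<Longrightarrow> pair_penalty n r x \<ge> 0"
  unfolding pair_penalty_def by (intro sum_nonneg) (auto simp: less_imp_le)

lemma weighted_sq_sum_nonneg:
  fixes r :: "nat \<Rightarrow> real" and v :: "nat \<Rightarrow> 'a::real_normed_vector"
  shows "\<forall>i<n. r i > 0 \<Longrightarrow> (\<Sum>i<n. r i * (norm (v i))\<^sup>2) \<ge> 0"
  by (intro sum_nonneg) (simp add: less_imp_le)

lemma weighted_sq_sum_eq_0_iff:
  fixes r :: "nat \<Rightarrow> real" and v :: "nat \<Rightarrow> 'a::real_normed_vector"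
  assumes "\<forall>i<n. r i > 0"
  shows "(\<Sum>i<n. r i * (norm (v i))\<^sup>2) = 0 \<longleftrightarrow> (\<forall>i<n. v i = 0)"
proof -
  have "(\<Sum>i<n. r i * (norm (v i))\<^sup>2) = 0 \<longleftrightarrow> (\<forall>i\<in>{..<n}. r i * (norm (v i))\<^sup>2 = 0)"
    by (rule sum_nonneg_eq_0_iff) (use assms in \<open>auto simp: less_imp_le\<close>)
  moreover have "r i * (norm (v i))\<^sup>2 = 0 \<longleftrightarrow> v i = 0" if "i < n" for i
    using assms that less_irrefl by fastforce
  ultimately show ?thesis
    by auto
qed

lemma sum_square_split:
  fixes F :: "nat \<Rightarrow> nat \<Rightarrow> 'b::comm_monoid_add"
  shows "(\<Sum>i<n. \<Sum>j<n. F i j) = (\<Sum>i<n. \<Sum>j\<in>{i<..<n}. F i j + F j i) + (\<Sum>i<n. F i i)"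
proof (induction n)
  case (Suc n)
  have empty: "{n<..<Suc n} = {}"
    by auto
  have insert_n: "{i<..<Suc n} = insert n {i<..<n}" if "i < n" for i
    using that by auto
  have "(\<Sum>i<Suc n. \<Sum>j\<in>{i<..<Suc n}. F i j + F j i)
      = (\<Sum>i<n. (F i n + F n i) + (\<Sum>j\<in>{i<..<n}. F i j + F j i))"
    by (simp add: insert_n empty)
  also have "\<dots> = (\<Sum>i<n. F i n) + (\<Sum>i<n. F n i) + (\<Sum>i<n. \<Sum>j\<in>{i<..<n}. F i j + F j i)"
    by (simp add: sum.distrib)
  finally have pairs: "(\<Sum>i<Suc n. \<Sum>j\<in>{i<..<Suc n}. F i j + F j i)
      = (\<Sum>i<n. F i n) + (\<Sum>i<n. F n i) + (\<Sum>i<n. \<Sum>j\<in>{i<..<n}. F i j + F j i)" .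
  have square: "(\<Sum>i<Suc n. \<Sum>j<Suc n. F i j)
      = (\<Sum>i<n. \<Sum>j<n. F i j) + (\<Sum>i<n. F i n) + ((\<Sum>j<n. F n j) + F n n)"
    by (simp add: sum.distrib add_ac)
  show ?case
    unfolding square pairs Suc.IH by (simp add: ac_simps)
qed simp

lemma inner_flow_sum:
  "(\<Sum>i<n. r i * (v i \<bullet> flow n r d i)) = (\<Sum>i<n. \<Sum>j\<in>{i<..<n}. r i * r j * (d i j \<bullet> (v i - v j)))"
proof -
  define F where "F i j = r i * r j * (v i \<bullet> anti d i j)" for i j
  have "(\<Sum>i<n. r i * (v i \<bullet> flow n r d i)) = (\<Sum>i<n. \<Sum>j<n. F i j)"
    by (simp add: flow_def F_def inner_sum_right sum_distrib_left mult.assoc)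
  also have "\<dots> = (\<Sum>i<n. \<Sum>j\<in>{i<..<n}. F i j + F j i) + (\<Sum>i<n. F i i)"
    by (rule sum_square_split)
  also have "\<dots> = (\<Sum>i<n. \<Sum>j\<in>{i<..<n}. r i * r j * (d i j \<bullet> (v i - v j)))"
    by (auto intro!: sum.cong simp: F_def anti_def inner_diff_right inner_commute algebra_simps)
  finally show ?thesis .
qed

lemma sum_anti_eq_0: "(\<Sum>i\<in>A. \<Sum>j\<in>A. (r i * r j) *\<^sub>R anti d i j) = (0 :: 'a::real_vector)"
proof -
  define S where "S = (\<Sum>i\<in>A. \<Sum>j\<in>A. (r i * r j) *\<^sub>R anti d i j)"
  have "S = (\<Sum>j\<in>A. \<Sum>i\<in>A. (r i * r j) *\<^sub>R anti d i j)"
    unfolding S_def by (rule sum.swap)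
  also have "\<dots> = (\<Sum>j\<in>A. \<Sum>i\<in>A. - ((r j * r i) *\<^sub>R anti d j i))"
  proof (intro sum.cong refl)
    fix i j
    have "anti d i j = - anti d j i"
      by (rule anti_swap)
    then show "(r i * r j) *\<^sub>R anti d i j = - ((r j * r i) *\<^sub>R anti d j i)"
      by (simp add: mult.commute)
  qed
  also have "\<dots> = - S"
    unfolding S_def by (simp add: sum_negf)
  finally have "2 *\<^sub>R S = 0"
    by (metis add.right_inverse scaleR_2)
  then show ?thesis
    unfolding S_def by simp
qed

lemma norm_add_sq: "(norm (p + q))\<^sup>2 = (norm p)\<^sup>2 + 2 * (p \<bullet> q) + (norm (q :: 'a::real_inner))\<^sup>2"
  by (simp add: power2_norm_eq_inner inner_add_left inner_add_right inner_commute)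

lemma neg_mult_norm_le_inner:
  "norm d \<le> \<mu> \<Longrightarrow> - (\<mu> * norm v) \<le> d \<bullet> (v :: 'a::real_inner)"
  using Cauchy_Schwarz_ineq2[of d v] mult_right_mono[of "norm d" \<mu> "norm v"] by simp

text \<open>Expanding the quadratic part around \<open>x\<close> leaves \<open>\<onehalf> \<Sum> r\<^sub>i \<parallel>y\<^sub>i - x\<^sub>i\<parallel>\<^sup>2\<close> plus a linear term, which
  stationarity turns into the dual pairing; the subgradient inequality bounds it by the change
  of the penalty part.\<close>
lemma certificate_growth:
  fixes a :: "nat \<Rightarrow> 'a::euclidean_space"
  assumes cert: "certificate n r a \<mu> d x" and rpos: "\<forall>i<n. r i > 0"
  shows "Pobj n r a \<mu> x + (1/2) * (\<Sum>i<n. r i * (norm (y i - x i))\<^sup>2) \<le> Pobj n r a \<mu> y"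
proof -
  have "y i - a i = (y i - x i) + (x i - a i)" for i
    by simp
  then have "r i * (norm (y i - a i))\<^sup>2 = r i * ((norm (y i - x i))\<^sup>2
      + 2 * ((y i - x i) \<bullet> (x i - a i)) + (norm (x i - a i))\<^sup>2)" for i
    by (metis norm_add_sq)
  then have quad: "(\<Sum>i<n. r i * (norm (y i - a i))\<^sup>2) = (\<Sum>i<n. r i * (norm (y i - x i))\<^sup>2)
      + 2 * (\<Sum>i<n. r i * ((y i - x i) \<bullet> (x i - a i))) + (\<Sum>i<n. r i * (norm (x i - a i))\<^sup>2)"
    by (simp add: sum.distrib sum_distrib_left distrib_left mult.left_commute)
  have "(\<Sum>i<n. r i * ((y i - x i) \<bullet> (x i - a i))) = (\<Sum>i<n. r i * ((y i - x i) \<bullet> flow n r d i))"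
    using cert unfolding certificate_def by (intro sum.cong) auto
  also have "\<dots> = (\<Sum>i<n. \<Sum>j\<in>{i<..<n}. r i * r j * (d i j \<bullet> ((y i - x i) - (y j - x j))))"
    by (rule inner_flow_sum)
  also have "\<dots> \<ge> (\<Sum>i<n. \<Sum>j\<in>{i<..<n}. r i * r j * (\<mu> * norm (x i - x j) - \<mu> * norm (y i - y j)))"
  proof (intro sum_mono)
    fix i j assume "i \<in> {..<n}" "j \<in> {i<..<n}"
    then have ij: "i < n" "j < n" "i < j" by auto
    have "norm (d i j) \<le> \<mu>" "\<mu> * norm (x i - x j) \<le> d i j \<bullet> (x j - x i)"
      using cert ij unfolding certificate_def by (auto simp: norm_minus_commute)
    moreover have "d i j \<bullet> ((y i - x i) - (y j - x j)) = d i j \<bullet> (y i - y j) + d i j \<bullet> (x j - x i)"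
      by (simp add: inner_diff_right algebra_simps)
    ultimately have "\<mu> * norm (x i - x j) - \<mu> * norm (y i - y j) \<le> d i j \<bullet> ((y i - x i) - (y j - x j))"
      using neg_mult_norm_le_inner[of "d i j" \<mu> "y i - y j"] by linarith
    then show "r i * r j * (\<mu> * norm (x i - x j) - \<mu> * norm (y i - y j))
        \<le> r i * r j * (d i j \<bullet> ((y i - x i) - (y j - x j)))"
      using rpos ij by (simp add: mult_left_mono)
  qed
  finally have "\<mu> * pair_penalty n r x - \<mu> * pair_penalty n r y
      \<le> (\<Sum>i<n. r i * ((y i - x i) \<bullet> (x i - a i)))"
    by (simp add: pair_penalty_def sum_distrib_left sum_subtractf algebra_simps)
  then show ?thesis
    unfolding Pobj_eq quad distrib_left by linarith
qed

lemma certificate_minimizer_unique: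
  fixes a :: "nat \<Rightarrow> 'a::euclidean_space"
  assumes "certificate n r a \<mu> d x" "\<forall>i<n. r i > 0" "Pobj n r a \<mu> y \<le> Pobj n r a \<mu> x"
  shows "\<forall>i<n. y i = x i"
proof -
  have "(\<Sum>i<n. r i * (norm (y i - x i))\<^sup>2) = 0"
    using certificate_growth[OF assms(1,2), of y] weighted_sq_sum_nonneg[OF assms(2), of "\<lambda>i. y i - x i"]
      assms(3) by linarith
  then show ?thesis
    using weighted_sq_sum_eq_0_iff[OF assms(2), of "\<lambda>i. y i - x i"] by simp
qed

lemma Pobj_cong: "\<forall>i<n. x i = y i \<Longrightarrow> Pobj n r a \<mu> x = Pobj n r a \<mu> y"
  unfolding Pobj_def by (intro arg_cong2[where f="(+)"] arg_cong2[where f="(*)"] refl sum.cong) auto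

lemma pair_penalty_cong: "\<forall>i<n. x i = y i \<Longrightarrow> pair_penalty n r x = pair_penalty n r y"
  unfolding pair_penalty_def by (intro sum.cong) auto

lemma certificate_cong: "\<forall>i<n. x i = y i \<Longrightarrow> certificate n r a \<mu> d x = certificate n r a \<mu> d y"
  unfolding certificate_def by auto

text \<open>\<open>xstar\<close> pads its minimizer with zeros beyond \<open>n\<close>.\<close>
lemma xstar_eq_certificate:
  fixes a :: "nat \<Rightarrow> 'a::euclidean_space"
  assumes cert: "certificate n r a \<mu> d x" and rpos: "\<forall>i<n. r i > 0"
  shows "\<forall>i<n. xstar n r a \<mu> i = x i"
proof -
  define x0 where "x0 i = (if i < n then x i else 0)" for i
  have x0_pad: "\<forall>i\<ge>n. x0 i = 0"
    by (simp add: x0_def)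
  have P_x0: "Pobj n r a \<mu> x0 = Pobj n r a \<mu> x"
    by (rule Pobj_cong) (simp add: x0_def)
  have min: "Pobj n r a \<mu> x \<le> Pobj n r a \<mu> y" for y
    using certificate_growth[OF cert rpos, of y] weighted_sq_sum_nonneg[OF rpos, of "\<lambda>i. y i - x i"]
    by linarith
  have "xstar n r a \<mu> = x0"
    unfolding xstar_def
  proof (rule the_equality)
    show "(\<forall>i\<ge>n. x0 i = 0) \<and> (\<forall>y. (\<forall>i\<ge>n. y i = 0) \<longrightarrow> Pobj n r a \<mu> x0 \<le> Pobj n r a \<mu> y)"
      using x0_pad min by (simp add: P_x0)
  next
    fix y assume y: "(\<forall>i\<ge>n. y i = 0) \<and> (\<forall>y'. (\<forall>i\<ge>n. y' i = 0) \<longrightarrow> Pobj n r a \<mu> y \<le> Pobj n r a \<mu> y')"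
    then have "Pobj n r a \<mu> y \<le> Pobj n r a \<mu> x"
      using x0_pad P_x0 by metis
    then have "\<forall>i<n. y i = x i"
      by (rule certificate_minimizer_unique[OF cert rpos])
    show "y = x0"
    proof
      fix i
      show "y i = x0 i"
        using \<open>\<forall>i<n. y i = x i\<close> y by (cases "i < n") (simp_all add: x0_def)
    qed
  qed
  then show ?thesis
    unfolding x0_def by simp
qed

section \<open>Existence of certificates\<close>

text \<open>The Lagrange dual of (P$_\mu$): maximize over \<open>\<parallel>d i j\<parallel> \<le> \<mu>\<close>; at a maximizer \<open>d\<close>
  the primal point is \<open>a + flow d\<close>.\<close>
definition dual_value :: "nat \<Rightarrow> (nat \<Rightarrow> real) \<Rightarrow> (nat \<Rightarrow> 'a::real_inner) \<Rightarrow> (nat \<Rightarrow> nat \<Rightarrow> 'a) \<Rightarrow> real" where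
  "dual_value n r a d = - (\<Sum>i<n. r i * (a i \<bullet> flow n r d i + (1/2) * (norm (flow n r d i))\<^sup>2))"

lemma flow_update:
  assumes "p < q" "q < n" "i < n"
  shows "flow n r (d(p := (d p)(q := d p q + e))) i
    = flow n r d i + (if i = p then r q *\<^sub>R e else if i = q then - (r p *\<^sub>R e) else 0)"
proof -
  have "anti (d(p := (d p)(q := d p q + e))) i j
      = anti d i j + (if i = p \<and> j = q then e else if i = q \<and> j = p then - e else 0)" for j
    using assms by (auto simp: anti_def)
  then have "flow n r (d(p := (d p)(q := d p q + e))) i
      = flow n r d i + (\<Sum>j<n. r j *\<^sub>R (if i = p \<and> j = q then e else if i = q \<and> j = p then - e else 0))"
    by (simp add: flow_def scaleR_add_right sum.distrib)
  also have "(\<Sum>j<n. r j *\<^sub>R (if i = p \<and> j = q then e else if i = q \<and> j = p then - e else 0))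
      = (if i = p then r q *\<^sub>R e else if i = q then - (r p *\<^sub>R e) else 0)"
    using assms by (auto simp: if_distrib[of "scaleR _"] sum.delta cong: if_cong)
  finally show ?thesis .
qed

lemma dual_value_update:
  fixes a :: "nat \<Rightarrow> 'a::real_inner" and r :: "nat \<Rightarrow> real" and d :: "nat \<Rightarrow> nat \<Rightarrow> 'a"
  assumes pq: "p < q" "q < n"
  defines "x \<equiv> \<lambda>i. a i + flow n r d i"
  shows "dual_value n r a (d(p := (d p)(q := d p q + e))) - dual_value n r a d
    = r p * r q * ((x q - x p) \<bullet> e) - (1/2) * (r p * r q * (r p + r q)) * (norm e)\<^sup>2"
proof -
  define h where "h i = (if i = p then r q *\<^sub>R e else if i = q then - (r p *\<^sub>R e) else 0)" for i
  define d' where "d' = d(p := (d p)(q := d p q + e))"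
  have "dual_value n r a d' - dual_value n r a d
      = - (\<Sum>i<n. r i * (a i \<bullet> flow n r d' i + (1/2) * (norm (flow n r d' i))\<^sup>2)
             - r i * (a i \<bullet> flow n r d i + (1/2) * (norm (flow n r d i))\<^sup>2))"
    by (simp add: dual_value_def sum_subtractf)
  also have "(\<Sum>i<n. r i * (a i \<bullet> flow n r d' i + (1/2) * (norm (flow n r d' i))\<^sup>2)
             - r i * (a i \<bullet> flow n r d i + (1/2) * (norm (flow n r d i))\<^sup>2))
      = (\<Sum>i<n. r i * (x i \<bullet> h i + (1/2) * (norm (h i))\<^sup>2))"
  proof (rule sum.cong)
    fix i assume "i \<in> {..<n}"
    then have "flow n r d' i = flow n r d i + h i"
      unfolding d'_def h_def by (intro flow_update[OF pq]) simp
    then show "r i * (a i \<bullet> flow n r d' i + (1/2) * (norm (flow n r d' i))\<^sup>2)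
        - r i * (a i \<bullet> flow n r d i + (1/2) * (norm (flow n r d i))\<^sup>2)
        = r i * (x i \<bullet> h i + (1/2) * (norm (h i))\<^sup>2)"
      using norm_add_sq[of "flow n r d i" "h i"]
      by (simp add: x_def inner_add_left inner_add_right algebra_simps)
  qed simp
  also have "(\<Sum>i<n. r i * (x i \<bullet> h i + (1/2) * (norm (h i))\<^sup>2))
      = r p * (x p \<bullet> h p + (1/2) * (norm (h p))\<^sup>2) + r q * (x q \<bullet> h q + (1/2) * (norm (h q))\<^sup>2)"
  proof -
    have "(\<Sum>i<n. r i * (x i \<bullet> h i + (1/2) * (norm (h i))\<^sup>2))
        = (\<Sum>i\<in>{p, q}. r i * (x i \<bullet> h i + (1/2) * (norm (h i))\<^sup>2))"
      using pq by (intro sum.mono_neutral_right) (auto simp: h_def)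
    then show ?thesis
      using pq by simp
  qed
  finally show ?thesis
    unfolding d'_def[symmetric] using pq by (simp add: h_def inner_diff_left power2_eq_square algebra_simps)
qed

lemma dual_value_step_increases:
  assumes rpos: "\<forall>i<n. r i > 0" and pq: "p < q" "q < n"
    and ascent: "(a q + flow n r d q - (a p + flow n r d p)) \<bullet> e > 0"
  obtains t where "0 < t" "t \<le> 1"
    "dual_value n r a (d(p := (d p)(q := d p q + t *\<^sub>R e))) > dual_value n r a d"
proof -
  define v where "v = a q + flow n r d q - (a p + flow n r d p)"
  define c where "c = (1/2) * (r p + r q) * (norm e)\<^sup>2"
  define t where "t = min 1 ((v \<bullet> e) / (c + 1))"
  have rp: "r p > 0" "r q > 0"
    using rpos pq by auto
  then have "c \<ge> 0"
    by (simp add: c_def)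
  have t: "0 < t" "t \<le> 1"
    using ascent \<open>c \<ge> 0\<close> by (auto simp: t_def v_def)
  have "c * t \<le> c * ((v \<bullet> e) / (c + 1))"
    using \<open>c \<ge> 0\<close> by (intro mult_left_mono) (auto simp: t_def)
  also have "\<dots> < v \<bullet> e"
    using ascent \<open>c \<ge> 0\<close> by (simp add: v_def field_simps)
  finally have "r p * r q * t * (v \<bullet> e - c * t) > 0"
    using rp t by simp
  moreover have "dual_value n r a (d(p := (d p)(q := d p q + t *\<^sub>R e))) - dual_value n r a d
      = r p * r q * t * (v \<bullet> e - c * t)"
    unfolding dual_value_update[OF pq] v_def c_def by (simp add: power2_eq_square algebra_simps)
  ultimately show ?thesis
    using that t by simp
qed

text \<open>First-order optimality of the dual: \<open>d p q\<close> must be aligned with \<open>x q - x p\<close>, for otherwise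
  moving it towards \<open>aligned_dual \<mu> x p q\<close>, which stays in the box, increases the dual value.\<close>
lemma dual_maximizer_certificate:
  assumes rpos: "\<forall>i<n. r i > 0"
    and box: "\<forall>i j. norm (d i j) \<le> \<mu>"
    and max: "\<And>d'. \<forall>i j. norm (d' i j) \<le> \<mu> \<Longrightarrow> dual_value n r a d' \<le> dual_value n r a d"
  shows "certificate n r a \<mu> d (\<lambda>i. a i + flow n r d i)"
proof -
  define x where "x i = a i + flow n r d i" for i
  have "\<mu> \<ge> 0"
    using box norm_ge_zero order_trans by blast
  have aligned: "\<mu> * norm (x q - x p) \<le> d p q \<bullet> (x q - x p)" if pq: "p < q" "q < n" for p q
  proof -
    define w where "w = aligned_dual \<mu> x p q"
    have "(x q - x p) \<bullet> (w - d p q) \<le> 0"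
    proof (rule ccontr)
      assume "\<not> (x q - x p) \<bullet> (w - d p q) \<le> 0"
      then have "(a q + flow n r d q - (a p + flow n r d p)) \<bullet> (w - d p q) > 0"
        by (simp add: x_def)
      then obtain t where t: "0 < t" "t \<le> 1"
        and gain: "dual_value n r a (d(p := (d p)(q := d p q + t *\<^sub>R (w - d p q)))) > dual_value n r a d"
        by (rule dual_value_step_increases[OF rpos pq])
      have "norm w \<le> \<mu>"
        unfolding w_def by (rule norm_aligned_dual_le[OF \<open>\<mu> \<ge> 0\<close>])
      have "norm ((1 - t) *\<^sub>R d p q + t *\<^sub>R w) \<le> (1 - t) * norm (d p q) + t * norm w"
        using norm_triangle_ineq[of "(1 - t) *\<^sub>R d p q" "t *\<^sub>R w"] t by simp
      also have "\<dots> \<le> (1 - t) * \<mu> + t * \<mu>"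
        using box \<open>norm w \<le> \<mu>\<close> t by (intro add_mono mult_left_mono) auto
      finally have "norm (d p q + t *\<^sub>R (w - d p q)) \<le> \<mu>"
        by (simp add: algebra_simps)
      then have "dual_value n r a (d(p := (d p)(q := d p q + t *\<^sub>R (w - d p q)))) \<le> dual_value n r a d"
        using box by (intro max) auto
      with gain show False
        by simp
    qed
    then show ?thesis
      using aligned_dual_inner[of \<mu> x p q] by (simp add: w_def inner_diff_right inner_commute)
  qed
  show ?thesis
    unfolding certificate_def using box aligned by (simp add: x_def)
qed

lemma continuous_on_anti_curry:
  "continuous_on UNIV (\<lambda>D::nat \<times> nat \<Rightarrow> 'a::real_normed_vector. anti (curry D) i j)"
  by (cases "i < j"; cases "j < i") (auto simp: anti_def intro!: continuous_intros)

lemma dual_value_has_maximizer: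
  fixes a :: "nat \<Rightarrow> 'a::euclidean_space"
  assumes "\<mu> \<ge> 0"
  obtains d where "\<forall>i j. norm (d i j) \<le> \<mu>"
    and "\<And>d'. \<forall>i j. norm (d' i j) \<le> \<mu> \<Longrightarrow> dual_value n r a d' \<le> dual_value n r a d"
proof -
  define S where "S = PiE UNIV (\<lambda>_::nat \<times> nat. cball (0::'a) \<mu>)"
  have "compactin (product_topology (\<lambda>_. euclidean) UNIV) S"
    by (simp add: S_def compactin_PiE)
  then have "compact S"
    by (simp add: euclidean_product_topology)
  moreover have "S \<noteq> {}"
    using assms by (auto simp: S_def PiE_eq_empty_iff)
  moreover have "continuous_on S (\<lambda>D. dual_value n r a (curry D))"
    unfolding dual_value_def flow_def
    by (intro continuous_intros continuous_on_subset[OF continuous_on_anti_curry]) auto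
  ultimately obtain D where "D \<in> S" and D: "\<forall>D'\<in>S. dual_value n r a (curry D') \<le> dual_value n r a (curry D)"
    using continuous_attains_sup by blast
  show ?thesis
  proof (rule that[of "curry D"])
    show "\<forall>i j. norm (curry D i j) \<le> \<mu>"
      using \<open>D \<in> S\<close> by (auto simp: S_def)
    fix d' :: "nat \<Rightarrow> nat \<Rightarrow> 'a"
    assume "\<forall>i j. norm (d' i j) \<le> \<mu>"
    then have "case_prod d' \<in> S"
      by (auto simp: S_def)
    then show "dual_value n r a d' \<le> dual_value n r a (curry D)"
      using D by (metis curry_case_prod)
  qed
qed

lemma certificate_exists:
  fixes a :: "nat \<Rightarrow> 'a::euclidean_space"
  assumes "\<mu> \<ge> 0" "\<forall>i<n. r i > 0"
  obtains d x where "certificate n r a \<mu> d x"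
proof -
  obtain d where "\<forall>i j. norm (d i j) \<le> \<mu>"
    and "\<And>d'. \<forall>i j. norm (d' i j) \<le> \<mu> \<Longrightarrow> dual_value n r a d' \<le> dual_value n r a d"
    using dual_value_has_maximizer[OF assms(1), where n=n and r=r and a=a] by blast
  then show ?thesis
    using that dual_maximizer_certificate[OF assms(2)] by blast
qed

section \<open>The solution path\<close>

lemma xstar_certificate:
  fixes a :: "nat \<Rightarrow> 'a::euclidean_space"
  assumes "\<mu> \<ge> 0" "\<forall>i<n. r i > 0"
  obtains d where "certificate n r a \<mu> d (xstar n r a \<mu>)"
proof -
  obtain d x where cert: "certificate n r a \<mu> d x"
    using certificate_exists[OF assms] .
  then have "certificate n r a \<mu> d (xstar n r a \<mu>)"
    using certificate_cong[OF xstar_eq_certificate[OF cert assms(2)]] by simp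
  then show ?thesis
    by (rule that)
qed

lemma xstar_growth:
  fixes a :: "nat \<Rightarrow> 'a::euclidean_space"
  assumes "\<mu> \<ge> 0" "\<forall>i<n. r i > 0"
  shows "Pobj n r a \<mu> (xstar n r a \<mu>) + (1/2) * (\<Sum>i<n. r i * (norm (x i - xstar n r a \<mu> i))\<^sup>2)
    \<le> Pobj n r a \<mu> x"
  using xstar_certificate[OF assms] certificate_growth[OF _ assms(2)] by metis

lemma xstar_zero:
  fixes a :: "nat \<Rightarrow> 'a::euclidean_space"
  assumes "\<forall>i<n. r i > 0"
  shows "\<forall>i<n. xstar n r a 0 i = a i"
proof -
  have "anti (\<lambda>_ _. 0) i j = (0::'a)" for i j
    by (simp add: anti_def)
  then have "certificate n r a 0 (\<lambda>_ _. 0) a"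
    by (simp add: certificate_def flow_def)
  then show ?thesis
    by (rule xstar_eq_certificate[OF _ assms])
qed

lemma pair_penalty_xstar_le:
  fixes a :: "nat \<Rightarrow> 'a::euclidean_space"
  assumes \<mu>: "\<mu> \<ge> 0" and rpos: "\<forall>i<n. r i > 0"
  shows "pair_penalty n r (xstar n r a \<mu>) \<le> pair_penalty n r a"
proof (cases "\<mu> = 0")
  case True
  have "pair_penalty n r (xstar n r a 0) = pair_penalty n r a"
    by (rule pair_penalty_cong) (rule xstar_zero[OF rpos])
  with True show ?thesis
    by simp
next
  case False
  have "Pobj n r a \<mu> (xstar n r a \<mu>) \<le> Pobj n r a \<mu> a"
    using xstar_growth[OF \<mu> rpos, where a=a and x=a]
      weighted_sq_sum_nonneg[OF rpos, of "\<lambda>i. a i - xstar n r a \<mu> i"] by linarith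
  then have "\<mu> * pair_penalty n r (xstar n r a \<mu>) \<le> \<mu> * pair_penalty n r a"
    using weighted_sq_sum_nonneg[OF rpos, of "\<lambda>i. xstar n r a \<mu> i - a i"] by (simp add: Pobj_eq)
  then show ?thesis
    using \<mu> False by simp
qed

text \<open>Adding the growth inequalities of (P$_\mu$) and (P$_{\mu'}$) at each other's minimizer.\<close>
lemma xstar_sq_dist_le:
  fixes a :: "nat \<Rightarrow> 'a::euclidean_space"
  assumes "\<mu> \<ge> 0" "\<mu>' \<ge> 0" and rpos: "\<forall>i<n. r i > 0"
  shows "(\<Sum>i<n. r i * (norm (xstar n r a \<mu>' i - xstar n r a \<mu> i))\<^sup>2) \<le> \<bar>\<mu> - \<mu>'\<bar> * pair_penalty n r a"
proof -
  define x where "x = xstar n r a \<mu>"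
  define x' where "x' = xstar n r a \<mu>'"
  define S where "S = (\<Sum>i<n. r i * (norm (x' i - x i))\<^sup>2)"
  have "Pobj n r a \<mu> x + (1/2) * S \<le> Pobj n r a \<mu> x'"
    using xstar_growth[OF assms(1) rpos, where a=a and x=x'] by (simp add: x_def x'_def S_def)
  moreover have "Pobj n r a \<mu>' x' + (1/2) * S \<le> Pobj n r a \<mu>' x"
    using xstar_growth[OF assms(2) rpos, where a=a and x=x] by (simp add: x_def x'_def S_def norm_minus_commute)
  ultimately have "S \<le> (\<mu> - \<mu>') * (pair_penalty n r x' - pair_penalty n r x)"
    unfolding Pobj_eq by (simp add: algebra_simps)
  also have "\<dots> \<le> \<bar>\<mu> - \<mu>'\<bar> * pair_penalty n r a"
  proof -
    have "\<bar>pair_penalty n r x' - pair_penalty n r x\<bar> \<le> pair_penalty n r a"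
      using pair_penalty_xstar_le[OF assms(1) rpos, where a=a] pair_penalty_xstar_le[OF assms(2) rpos, where a=a]
        pair_penalty_nonneg[OF rpos, of x] pair_penalty_nonneg[OF rpos, of x']
      unfolding x_def x'_def by linarith
    then show ?thesis
      by (metis abs_ge_self abs_mult mult_left_mono abs_ge_zero order_trans)
  qed
  finally show ?thesis
    by (simp add: S_def x_def x'_def)
qed

lemma continuous_on_xstar:
  fixes a :: "nat \<Rightarrow> 'a::euclidean_space"
  assumes rpos: "\<forall>i<n. r i > 0" and i: "i < n"
  shows "continuous_on {0..} (\<lambda>\<mu>. xstar n r a \<mu> i)"
  unfolding continuous_on_def
proof
  fix \<mu>0 :: real
  assume "\<mu>0 \<in> {0..}"
  have ri: "r i > 0"
    using rpos i by simp
  define bound where "bound \<mu> = sqrt (\<bar>\<mu>0 - \<mu>\<bar> * pair_penalty n r a / r i)" for \<mu>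
  have "norm (xstar n r a \<mu> i - xstar n r a \<mu>0 i) \<le> bound \<mu>" if "\<mu> \<in> {0..}" for \<mu>
  proof -
    have "r i * (norm (xstar n r a \<mu> i - xstar n r a \<mu>0 i))\<^sup>2
        \<le> (\<Sum>k<n. r k * (norm (xstar n r a \<mu> k - xstar n r a \<mu>0 k))\<^sup>2)"
      using rpos i by (intro member_le_sum) (auto simp: less_imp_le)
    also have "\<dots> \<le> \<bar>\<mu>0 - \<mu>\<bar> * pair_penalty n r a"
      using xstar_sq_dist_le[OF _ _ rpos] \<open>\<mu>0 \<in> {0..}\<close> that by simp
    finally show ?thesis
      using ri by (auto simp: bound_def field_simps intro!: real_le_rsqrt)
  qed
  then have "\<forall>\<^sub>F \<mu> in at \<mu>0 within {0..}. norm (xstar n r a \<mu> i - xstar n r a \<mu>0 i) \<le> bound \<mu>"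
    by (auto simp: eventually_at_filter)
  moreover have "(bound \<longlongrightarrow> 0) (at \<mu>0 within {0..})"
  proof -
    have "(bound \<longlongrightarrow> bound \<mu>0) (at \<mu>0 within {0..})"
      unfolding bound_def using ri by (intro tendsto_intros) auto
    then show ?thesis
      by (simp add: bound_def)
  qed
  ultimately have "((\<lambda>\<mu>. xstar n r a \<mu> i - xstar n r a \<mu>0 i) \<longlongrightarrow> 0) (at \<mu>0 within {0..})"
    by (rule Lim_null_comparison)
  then show "((\<lambda>\<mu>. xstar n r a \<mu> i) \<longlongrightarrow> xstar n r a \<mu>0 i) (at \<mu>0 within {0..})"
    by (rule LIM_zero_cancel)
qed

lemma closed_fusion_parameters:
  fixes a :: "nat \<Rightarrow> 'a::euclidean_space"
  assumes "\<forall>i<n. r i > 0" "i < n" "j < n"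
  shows "closed {\<mu>. 0 \<le> \<mu> \<and> xstar n r a \<mu> i = xstar n r a \<mu> j}"
proof -
  have "continuous_on {0..} (\<lambda>\<mu>. xstar n r a \<mu> i - xstar n r a \<mu> j)"
    using continuous_on_xstar[OF assms(1)] assms(2,3) by (intro continuous_intros)
  then have "closed {\<mu> \<in> {0..}. xstar n r a \<mu> i - xstar n r a \<mu> j = 0}"
    by (rule continuous_closed_preimage_constant) simp
  moreover have "{\<mu> \<in> {0..}. xstar n r a \<mu> i - xstar n r a \<mu> j = 0}
      = {\<mu>. 0 \<le> \<mu> \<and> xstar n r a \<mu> i = xstar n r a \<mu> j}"
    by auto
  ultimately show ?thesis
    by simp
qed

section \<open>Clusters and gluing\<close>

lemma rprime_pos: "\<forall>i<n. r i > 0 \<Longrightarrow> C \<noteq> {} \<Longrightarrow> C \<subseteq> {..<n} \<Longrightarrow> rprime r C > 0"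
  unfolding rprime_def by (intro sum_pos) (auto intro: finite_subset)

definition indexed_partition :: "nat \<Rightarrow> (nat \<Rightarrow> nat set) \<Rightarrow> nat \<Rightarrow> bool" where
  "indexed_partition K C n \<longleftrightarrow> (\<forall>k<K. C k \<noteq> {} \<and> C k \<subseteq> {..<n}) \<and>
     (\<forall>k<K. \<forall>k'<K. k \<noteq> k' \<longrightarrow> C k \<inter> C k' = {}) \<and> (\<Union>k<K. C k) = {..<n}"

lemma partition_subset: "indexed_partition K C n \<Longrightarrow> k < K \<Longrightarrow> i \<in> C k \<Longrightarrow> i < n"
  unfolding indexed_partition_def by blast

lemma partition_nonempty: "indexed_partition K C n \<Longrightarrow> k < K \<Longrightarrow> C k \<noteq> {}"
  unfolding indexed_partition_def by blast

lemma partition_finite: "indexed_partition K C n \<Longrightarrow> k < K \<Longrightarrow> finite (C k)"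
  unfolding indexed_partition_def by (meson finite_lessThan finite_subset)

lemma partition_cover: "indexed_partition K C n \<Longrightarrow> i < n \<Longrightarrow> \<exists>k<K. i \<in> C k"
  unfolding indexed_partition_def by blast

lemma partition_unique:
  "indexed_partition K C n \<Longrightarrow> k < K \<Longrightarrow> k' < K \<Longrightarrow> i \<in> C k \<Longrightarrow> i \<in> C k' \<Longrightarrow> k = k'"
  unfolding indexed_partition_def by blast

lemma partition_rprime_pos:
  assumes "\<forall>i<n. r i > 0" "indexed_partition K C n"
  shows "\<forall>k<K. rprime r (C k) > 0"
proof (intro allI impI)
  fix k assume "k < K"
  have "C k \<subseteq> {..<n}"
    using partition_subset[OF assms(2) \<open>k < K\<close>] by blast
  then show "rprime r (C k) > 0"
    by (rule rprime_pos[OF assms(1) partition_nonempty[OF assms(2) \<open>k < K\<close>]])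
qed

lemma partition_of_level_sets:
  assumes C: "bij_betw C {..<K} ((\<lambda>i. {j. j < n \<and> F j = F i}) ` {..<n})"
  shows "indexed_partition K C n" and "\<forall>k<K. \<forall>i\<in>C k. C k = {j. j < n \<and> F j = F i}"
proof -
  have image: "C ` {..<K} = (\<lambda>i. {j. j < n \<and> F j = F i}) ` {..<n}"
    using C by (simp add: bij_betw_def)
  have member: "\<exists>i0<n. C k = {j. j < n \<and> F j = F i0}" if "k < K" for k
    using image that by (metis (no_types, lifting) imageE imageI lessThan_iff)
  show level: "\<forall>k<K. \<forall>i\<in>C k. C k = {j. j < n \<and> F j = F i}"
    using member by fastforce
  have "C k \<inter> C k' = {}" if "k < K" "k' < K" "k \<noteq> k'" for k k'
  proof (rule ccontr)
    assume "C k \<inter> C k' \<noteq> {}"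
    then have "C k = C k'"
      using level that by blast
    then show False
      using C that by (meson bij_betw_def inj_onD lessThan_iff)
  qed
  moreover have "C k \<noteq> {} \<and> C k \<subseteq> {..<n}" if "k < K" for k
    using member[OF that] by auto
  moreover have "(\<Union>k<K. C k) = {..<n}"
    using image by auto
  ultimately show "indexed_partition K C n"
    unfolding indexed_partition_def by blast
qed

lemma clusters_eq_level_sets:
  shows "\<mu> = 0 \<Longrightarrow> clusters n r a \<mu> = (\<lambda>i. {j. j < n \<and> id j = id i}) ` {..<n}"
    and "\<mu> \<noteq> 0 \<Longrightarrow> clusters n r a \<mu> = (\<lambda>i. {j. j < n \<and> xstar n r a \<mu> j = xstar n r a \<mu> i}) ` {..<n}"
proof -
  show "\<mu> = 0 \<Longrightarrow> clusters n r a \<mu> = (\<lambda>i. {j. j < n \<and> id j = id i}) ` {..<n}"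
    by (auto simp: clusters_def)
  have "{(i, j). i < n \<and> j < n \<and> xstar n r a \<mu> i = xstar n r a \<mu> j} `` {i}
      = {j. j < n \<and> xstar n r a \<mu> j = xstar n r a \<mu> i}" if "i < n" for i
    using that by auto
  then show "\<mu> \<noteq> 0 \<Longrightarrow> clusters n r a \<mu> = (\<lambda>i. {j. j < n \<and> xstar n r a \<mu> j = xstar n r a \<mu> i}) ` {..<n}"
    unfolding clusters_def quotient_def by auto
qed

lemma clusters_partition:
  assumes C: "bij_betw C {..<K} (clusters n r a \<mu>)"
  shows "indexed_partition K C n"
    and "\<mu> = 0 \<Longrightarrow> k < K \<Longrightarrow> i \<in> C k \<Longrightarrow> C k = {i}"
    and "\<mu> \<noteq> 0 \<Longrightarrow> k < K \<Longrightarrow> i \<in> C k \<Longrightarrow> C k = {j. j < n \<and> xstar n r a \<mu> j = xstar n r a \<mu> i}"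
proof -
  show part: "indexed_partition K C n"
  proof (cases "\<mu> = 0")
    case True
    show ?thesis
      using C unfolding clusters_eq_level_sets(1)[OF True] by (rule partition_of_level_sets(1))
  next
    case False
    show ?thesis
      using C unfolding clusters_eq_level_sets(2)[OF False] by (rule partition_of_level_sets(1))
  qed
  show "C k = {i}" if "\<mu> = 0" "k < K" "i \<in> C k"
  proof -
    have "C k = {j. j < n \<and> id j = id i}"
      using partition_of_level_sets(2)[OF C[unfolded clusters_eq_level_sets(1)[OF \<open>\<mu> = 0\<close>]]] that
      by blast
    then show ?thesis
      using partition_subset[OF part that(2,3)] by auto
  qed
  show "C k = {j. j < n \<and> xstar n r a \<mu> j = xstar n r a \<mu> i}" if "\<mu> \<noteq> 0" "k < K" "i \<in> C k"
    using partition_of_level_sets(2)[OF C[unfolded clusters_eq_level_sets(2)[OF \<open>\<mu> \<noteq> 0\<close>]]] that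
    by blast
qed

lemma eq_aligned_if_inner_ge:
  fixes d v :: "'a::real_inner"
  assumes "norm d \<le> \<mu>" "\<mu> * norm v \<le> d \<bullet> v" "v \<noteq> 0"
  shows "d = (\<mu> / norm v) *\<^sub>R v"
proof -
  have nv: "norm v > 0"
    using assms(3) by simp
  have \<mu>: "\<mu> \<ge> 0"
    using assms(1) norm_ge_zero order_trans by blast
  have "\<mu> * \<mu> \<le> (\<mu> / norm v) * (d \<bullet> v)"
    using mult_left_mono[OF assms(2), of "\<mu> / norm v"] \<mu> nv by simp
  moreover have "(norm d)\<^sup>2 \<le> \<mu>\<^sup>2"
    using assms(1) by (simp add: power_mono)
  ultimately have "(norm (d - (\<mu> / norm v) *\<^sub>R v))\<^sup>2 \<le> 0"
    using norm_add_sq[of d "- ((\<mu> / norm v) *\<^sub>R v)"] nv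
    by (simp add: power_mult_distrib power2_eq_square)
  then show ?thesis
    by simp
qed

lemma certificate_anti:
  assumes cert: "certificate n r a \<mu> d x" and ij: "i < n" "j < n" "i \<noteq> j"
  shows "norm (anti d i j) \<le> \<mu> \<and> \<mu> * norm (x j - x i) \<le> anti d i j \<bullet> (x j - x i)"
proof (cases "i < j")
  case False
  then have "j < i"
    using ij by simp
  then have "norm (d j i) \<le> \<mu> \<and> \<mu> * norm (x i - x j) \<le> d j i \<bullet> (x i - x j)"
    using cert ij unfolding certificate_def by blast
  moreover have "- d j i \<bullet> (x j - x i) = d j i \<bullet> (x i - x j)"
    by (simp add: inner_diff_right)
  ultimately show ?thesis
    using \<open>j < i\<close> by (simp add: anti_def norm_minus_commute)
qed (use cert ij in \<open>auto simp: certificate_def anti_def\<close>)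

lemma certificate_anti_aligned:
  fixes a :: "nat \<Rightarrow> 'a::real_inner"
  assumes "certificate n r a \<mu> d x" "i < n" "j < n" "x i \<noteq> x j"
  shows "anti d i j = aligned_dual \<mu> x i j"
  using certificate_anti[OF assms(1-3)] assms(4) unfolding aligned_dual_def
  by (intro eq_aligned_if_inner_ge) auto

lemma flow_glued:
  fixes d dp :: "nat \<Rightarrow> nat \<Rightarrow> 'a::real_vector"
  assumes part: "indexed_partition K C n" and k: "k < K" "i \<in> C k"
    and inner: "\<forall>j\<in>C k. anti d i j = anti dp i j"
    and cross: "\<forall>k'<K. k' \<noteq> k \<longrightarrow> (\<forall>j\<in>C k'. anti d i j = e k')" and diag: "e k = 0"
  shows "flow n r d i = (\<Sum>j\<in>C k. r j *\<^sub>R anti dp i j) + (\<Sum>k'<K. rprime r (C k') *\<^sub>R e k')"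
proof -
  have "flow n r d i = (\<Sum>j\<in>(\<Union>k'<K. C k'). r j *\<^sub>R anti d i j)"
    using part by (simp add: flow_def indexed_partition_def)
  also have "\<dots> = (\<Sum>k'<K. \<Sum>j\<in>C k'. r j *\<^sub>R anti d i j)"
    using part by (intro sum.UNION_disjoint) (auto simp: partition_finite indexed_partition_def)
  also have "\<dots> = (\<Sum>j\<in>C k. r j *\<^sub>R anti d i j) + (\<Sum>k'\<in>{..<K} - {k}. \<Sum>j\<in>C k'. r j *\<^sub>R anti d i j)"
    using k by (simp add: sum.remove)
  also have "(\<Sum>j\<in>C k. r j *\<^sub>R anti d i j) = (\<Sum>j\<in>C k. r j *\<^sub>R anti dp i j)"
    using inner by simp
  also have "(\<Sum>k'\<in>{..<K} - {k}. \<Sum>j\<in>C k'. r j *\<^sub>R anti d i j)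
      = (\<Sum>k'\<in>{..<K} - {k}. rprime r (C k') *\<^sub>R e k')"
  proof (intro sum.cong refl)
    fix k' assume "k' \<in> {..<K} - {k}"
    then have "\<forall>j\<in>C k'. anti d i j = e k'"
      using cross by auto
    then show "(\<Sum>j\<in>C k'. r j *\<^sub>R anti d i j) = rprime r (C k') *\<^sub>R e k'"
      by (simp add: rprime_def scaleR_sum_left)
  qed
  also have "\<dots> = (\<Sum>k'<K. rprime r (C k') *\<^sub>R e k')"
    using k diag by (simp add: sum.remove[where A="{..<K}" and x=k])
  finally show ?thesis .
qed

text \<open>Gluing: within-cluster duals \<open>dp\<close> balancing the data against the cluster means, together
  with a dual solution \<open>e\<close> of the problem on the cluster means, certify the lifted point.\<close>
lemma certificate_glue:
  fixes a :: "nat \<Rightarrow> 'a::euclidean_space"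
  assumes part: "indexed_partition K C n"
    and dp_bound: "\<forall>k<K. \<forall>i\<in>C k. \<forall>j\<in>C k. i < j \<longrightarrow> norm (dp i j) \<le> \<mu>"
    and dp_eq: "\<forall>k<K. \<forall>i\<in>C k. a i - abar r a (C k) = - (\<Sum>j\<in>C k. r j *\<^sub>R anti dp i j)"
    and e: "\<forall>k<K. \<forall>k'<K. k \<noteq> k' \<longrightarrow> norm (e k k') \<le> \<mu> \<and> \<mu> * norm (xh k' - xh k) \<le> e k k' \<bullet> (xh k' - xh k)"
    and e_diag: "\<forall>k<K. e k k = 0"
    and e_eq: "\<forall>k<K. xh k - abar r a (C k) = (\<Sum>k'<K. rprime r (C k') *\<^sub>R e k k')"
    and x: "\<forall>k<K. \<forall>i\<in>C k. x i = xh k"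
    and d_in: "\<forall>k<K. \<forall>i\<in>C k. \<forall>j\<in>C k. d i j = dp i j"
    and d_out: "\<forall>k<K. \<forall>k'<K. k \<noteq> k' \<longrightarrow> (\<forall>i\<in>C k. \<forall>j\<in>C k'. anti d i j = e k k')"
  shows "certificate n r a \<mu> d x"
  unfolding certificate_def
proof (rule conjI; intro allI impI)
  fix i j assume ij: "i < n" "j < n" "i < j"
  obtain k k' where k: "k < K" "i \<in> C k" and k': "k' < K" "j \<in> C k'"
    using partition_cover[OF part] ij by metis
  show "norm (d i j) \<le> \<mu> \<and> \<mu> * norm (x j - x i) \<le> d i j \<bullet> (x j - x i)"
  proof (cases "k = k'")
    case True
    then show ?thesis
      using dp_bound d_in x k k' ij by auto
  next
    case False
    then have "d i j = e k k'"
      using d_out k k' ij by (metis anti_def)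
    then show ?thesis
      using e x k k' False by auto
  qed
next
  fix i assume "i < n"
  then obtain k where k: "k < K" "i \<in> C k"
    using partition_cover[OF part] by blast
  have "anti d i j = anti dp i j" if "j \<in> C k" for j
    using d_in k that by (simp add: anti_def)
  moreover have "\<forall>k'<K. k' \<noteq> k \<longrightarrow> (\<forall>j\<in>C k'. anti d i j = e k k')"
    using d_out k by auto
  ultimately have "flow n r d i
      = (\<Sum>j\<in>C k. r j *\<^sub>R anti dp i j) + (\<Sum>k'<K. rprime r (C k') *\<^sub>R e k k')"
    using e_diag k by (intro flow_glued[OF part k]) auto
  then have flow_i: "flow n r d i = (\<Sum>j\<in>C k. r j *\<^sub>R anti dp i j) + (xh k - abar r a (C k))"
    using e_eq k by simp
  have "x i - a i = (xh k - abar r a (C k)) - (a i - abar r a (C k))"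
    using x k by simp
  also have "\<dots> = (xh k - abar r a (C k)) + (\<Sum>j\<in>C k. r j *\<^sub>R anti dp i j)"
    using dp_eq k by simp
  also have "\<dots> = flow n r d i"
    using flow_i by (simp add: add.commute)
  finally show "x i - a i = flow n r d i" .
qed

text \<open>A certificate of the problem on the cluster means lifts to the full problem, so the
  solution of (P$_\mu$) is constant on the clusters.\<close>
lemma xstar_on_clusters:
  fixes a :: "nat \<Rightarrow> 'a::euclidean_space"
  assumes rpos: "\<forall>i<n. r i > 0" and part: "indexed_partition K C n"
    and dp_bound: "\<forall>k<K. \<forall>i\<in>C k. \<forall>j\<in>C k. i < j \<longrightarrow> norm (dp i j) \<le> \<mu>"
    and dp_eq: "\<forall>k<K. \<forall>i\<in>C k. a i - abar r a (C k) = - (\<Sum>j\<in>C k. r j *\<^sub>R anti dp i j)"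
    and reduced: "certificate K (\<lambda>k. rprime r (C k)) (\<lambda>k. abar r a (C k)) \<mu> dR xR"
  shows "\<forall>k<K. \<forall>i\<in>C k. xstar n r a \<mu> i = xR k"
proof -
  obtain cl where cl: "\<forall>i<n. cl i < K \<and> i \<in> C (cl i)"
    using partition_cover[OF part] by metis
  have cl_eq: "cl i = k" if "k < K" "i \<in> C k" for i k
    using cl partition_unique[OF part] partition_subset[OF part] that by blast
  define d where "d i j = (if cl i = cl j then dp i j else anti dR (cl i) (cl j))" for i j
  define x where "x i = xR (cl i)" for i
  have "certificate n r a \<mu> d x"
  proof (rule certificate_glue[OF part dp_bound dp_eq, where e="anti dR" and xh=xR])
    show "\<forall>k<K. \<forall>k'<K. k \<noteq> k' \<longrightarrow>
        norm (anti dR k k') \<le> \<mu> \<and> \<mu> * norm (xR k' - xR k) \<le> anti dR k k' \<bullet> (xR k' - xR k)"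
      using certificate_anti[OF reduced] by blast
    show "\<forall>k<K. anti dR k k = 0"
      by simp
    show "\<forall>k<K. xR k - abar r a (C k) = (\<Sum>k'<K. rprime r (C k') *\<^sub>R anti dR k k')"
      using reduced by (simp add: certificate_def flow_def)
    show "\<forall>k<K. \<forall>i\<in>C k. x i = xR k"
      using cl_eq by (auto simp: x_def)
    show "\<forall>k<K. \<forall>i\<in>C k. \<forall>j\<in>C k. d i j = dp i j"
      using cl_eq by (auto simp: d_def)
    show "\<forall>k<K. \<forall>k'<K. k \<noteq> k' \<longrightarrow> (\<forall>i\<in>C k. \<forall>j\<in>C k'. anti d i j = anti dR k k')"
    proof (intro allI impI ballI)
      fix k k' i j
      assume "k < K" "k' < K" "k \<noteq> k'" "i \<in> C k" "j \<in> C k'"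
      then have "cl i = k" "cl j = k'"
        using cl_eq by blast+
      with \<open>k \<noteq> k'\<close> show "anti d i j = anti dR k k'"
        by (auto simp: anti_def d_def)
    qed
  qed
  then have x: "\<forall>i<n. xstar n r a \<mu> i = x i"
    by (rule xstar_eq_certificate[OF _ rpos])
  show ?thesis
  proof (intro allI impI ballI)
    fix k i assume "k < K" "i \<in> C k"
    then show "xstar n r a \<mu> i = xR k"
      using x partition_subset[OF part] cl_eq[of k i] by (simp add: x_def)
  qed
qed

text \<open>Off its level set, the duals at a point of a certified solution are forced.\<close>
lemma certificate_flow_split:
  fixes a :: "nat \<Rightarrow> 'a::real_inner"
  assumes cert: "certificate n r a \<mu> d x" and i: "i < n" and L: "L = {j. j < n \<and> x j = x i}"
  shows "x i - a i = (\<Sum>j\<in>{..<n} - L. r j *\<^sub>R aligned_dual \<mu> x i j) + (\<Sum>j\<in>L. r j *\<^sub>R anti d i j)"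
proof -
  have "L \<subseteq> {..<n}"
    using L by auto
  have "x i - a i = flow n r d i"
    using cert i unfolding certificate_def by blast
  also have "\<dots> = (\<Sum>j\<in>{..<n} - L. r j *\<^sub>R anti d i j) + (\<Sum>j\<in>L. r j *\<^sub>R anti d i j)"
    unfolding flow_def by (rule sum.subset_diff[OF \<open>L \<subseteq> {..<n}\<close>]) simp
  also have "(\<Sum>j\<in>{..<n} - L. r j *\<^sub>R anti d i j) = (\<Sum>j\<in>{..<n} - L. r j *\<^sub>R aligned_dual \<mu> x i j)"
    using certificate_anti_aligned[OF cert i] L by (intro sum.cong refl) auto
  finally show ?thesis .
qed

text \<open>Summed over the level set with weights \<open>r\<close>, the within-set duals cancel by antisymmetry.\<close>
lemma certificate_level_set_balance:
  fixes a :: "nat \<Rightarrow> 'a::euclidean_space"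
  assumes cert: "certificate n r a \<mu> d x" and rpos: "\<forall>i<n. r i > 0" and i: "i < n"
    and L: "L = {j. j < n \<and> x j = x i}"
  shows "a i - abar r a L = - (\<Sum>j\<in>L. r j *\<^sub>R anti d i j)"
proof -
  define V where "V = (\<Sum>j\<in>{..<n} - L. r j *\<^sub>R aligned_dual \<mu> x i j)"
  have within: "(\<Sum>j\<in>L. r j *\<^sub>R anti d i' j) = (x i - a i') - V" if "i' \<in> L" for i'
  proof -
    have i': "i' < n" "x i' = x i"
      using that L by auto
    then have "L = {j. j < n \<and> x j = x i'}"
      using L by simp
    moreover have "aligned_dual \<mu> x i' j = aligned_dual \<mu> x i j" for j
      using i' by (simp add: aligned_dual_def)
    ultimately show ?thesis
      using certificate_flow_split[OF cert i'(1)] i' by (simp add: V_def algebra_simps)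
  qed
  have "(\<Sum>i'\<in>L. r i' *\<^sub>R ((x i - V) - a i')) = (\<Sum>i'\<in>L. r i' *\<^sub>R (\<Sum>j\<in>L. r j *\<^sub>R anti d i' j))"
  proof (intro sum.cong refl)
    fix i' assume "i' \<in> L"
    show "r i' *\<^sub>R ((x i - V) - a i') = r i' *\<^sub>R (\<Sum>j\<in>L. r j *\<^sub>R anti d i' j)"
      unfolding within[OF \<open>i' \<in> L\<close>] by (simp add: algebra_simps)
  qed
  also have "\<dots> = (\<Sum>i'\<in>L. \<Sum>j\<in>L. (r i' * r j) *\<^sub>R anti d i' j)"
    by (simp add: scaleR_sum_right)
  also have "\<dots> = 0"
    by (rule sum_anti_eq_0)
  finally have sum_eq: "(\<Sum>i'\<in>L. r i' *\<^sub>R a i') = rprime r L *\<^sub>R (x i - V)"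
    by (simp add: rprime_def scaleR_diff_right sum_subtractf scaleR_sum_left)
  have "rprime r L > 0"
    using rpos L i by (intro rprime_pos) auto
  then have abar_eq: "abar r a L = x i - V"
    unfolding abar_def sum_eq by simp
  have "i \<in> L"
    using L i by simp
  show ?thesis
    unfolding abar_eq within[OF \<open>i \<in> L\<close>] by (simp add: algebra_simps)
qed

lemma finite_enumeration:
  assumes "finite P"
  obtains K and C :: "nat \<Rightarrow> 'b" where "bij_betw C {..<K} P"
  using ex_bij_betw_nat_finite[OF assms] by (auto simp: atLeast0LessThan)

lemma certificate_level_set_partition:
  fixes a :: "nat \<Rightarrow> 'a::euclidean_space" and K :: nat
  assumes cert: "certificate n r a \<mu> d x" and rpos: "\<forall>i<n. r i > 0"
    and C: "bij_betw C {..<K} ((\<lambda>i. {j. j < n \<and> x j = x i}) ` {..<n})"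
  shows "\<forall>k<K. \<forall>i\<in>C k. \<forall>j\<in>C k. i < j \<longrightarrow> norm (d i j) \<le> \<mu>"
    and "\<forall>k<K. \<forall>i\<in>C k. a i - abar r a (C k) = - (\<Sum>j\<in>C k. r j *\<^sub>R anti d i j)"
proof (safe)
  fix k i j assume "k < K" "i \<in> C k" "j \<in> C k" "i < j"
  then have "i < n" "j < n"
    using partition_subset[OF partition_of_level_sets(1)[OF C]] by blast+
  then show "norm (d i j) \<le> \<mu>"
    using cert \<open>i < j\<close> unfolding certificate_def by blast
next
  fix k i assume "k < K" "i \<in> C k"
  then have "i < n" "C k = {j. j < n \<and> x j = x i}"
    using partition_subset[OF partition_of_level_sets(1)[OF C]] partition_of_level_sets(2)[OF C]
    by blast+
  then show "a i - abar r a (C k) = - (\<Sum>j\<in>C k. r j *\<^sub>R anti d i j)"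
    by (rule certificate_level_set_balance[OF cert rpos])
qed

text \<open>Fused points stay fused as \<open>\<mu>\<close> grows: the level sets of \<open>x*(\<mu>)\<close> form clusters whose
  within-cluster duals of \<open>x*(\<mu>)\<close> remain feasible at any larger \<open>\<mu>'\<close>.\<close>
lemma xstar_fused_mono:
  fixes a :: "nat \<Rightarrow> 'a::euclidean_space"
  assumes rpos: "\<forall>i<n. r i > 0" and \<mu>: "0 \<le> \<mu>" "\<mu> \<le> \<mu>'" and ij: "i < n" "j < n"
    and fused: "xstar n r a \<mu> i = xstar n r a \<mu> j"
  shows "xstar n r a \<mu>' i = xstar n r a \<mu>' j"
proof -
  obtain d where cert: "certificate n r a \<mu> d (xstar n r a \<mu>)"
    using xstar_certificate[OF \<mu>(1) rpos] .
  have "finite ((\<lambda>i. {j. j < n \<and> xstar n r a \<mu> j = xstar n r a \<mu> i}) ` {..<n})"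
    by simp
  then obtain K :: nat and C where C: "bij_betw C {..<K} ((\<lambda>i. {j. j < n \<and> xstar n r a \<mu> j = xstar n r a \<mu> i}) ` {..<n})"
    by (rule finite_enumeration)
  note part = partition_of_level_sets(1)[OF C]
  note data = certificate_level_set_partition[OF cert rpos C]
  have bound: "\<forall>k<K. \<forall>i\<in>C k. \<forall>j\<in>C k. i < j \<longrightarrow> norm (d i j) \<le> \<mu>'"
  proof (intro allI impI ballI)
    fix k i j assume "k < K" "i \<in> C k" "j \<in> C k" "i < j"
    then have "norm (d i j) \<le> \<mu>"
      using data(1) by blast
    with \<mu>(2) show "norm (d i j) \<le> \<mu>'"
      by linarith
  qed
  have "\<mu>' \<ge> 0"
    using \<mu> by linarith
  then obtain dR xR where reduced: "certificate K (\<lambda>k. rprime r (C k)) (\<lambda>k. abar r a (C k)) \<mu>' dR xR"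
    by (rule certificate_exists[OF _ partition_rprime_pos[OF rpos part]])
  have lifted: "\<forall>k<K. \<forall>i\<in>C k. xstar n r a \<mu>' i = xR k"
    by (rule xstar_on_clusters[OF rpos part bound data(2) reduced])
  obtain k where k: "k < K" "i \<in> C k"
    using partition_cover[OF part] ij by blast
  then have "C k = {j. j < n \<and> xstar n r a \<mu> j = xstar n r a \<mu> i}"
    using partition_of_level_sets(2)[OF C] by blast
  then have "j \<in> C k"
    using fused ij by simp
  then have "xstar n r a \<mu>' i = xR k" "xstar n r a \<mu>' j = xR k"
    using lifted k by blast+
  then show ?thesis
    by simp
qed

lemma abar_const:
  assumes "\<forall>j\<in>L. a j = v" "rprime r L > 0"
  shows "abar r a L = v"
proof -
  have "(\<Sum>j\<in>L. r j *\<^sub>R a j) = rprime r L *\<^sub>R v"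
    using assms(1) by (simp add: rprime_def scaleR_sum_left)
  then show ?thesis
    using assms(2) by (simp add: abar_def)
qed

text \<open>When coinciding points carry coinciding data, the duals between coinciding points contribute
  nothing, so the aligned duals (zero between coinciding points) satisfy stationarity.\<close>
lemma certificate_aligned_flow:
  fixes a :: "nat \<Rightarrow> 'a::euclidean_space"
  assumes cert: "certificate n r a \<mu> d x" and rpos: "\<forall>i<n. r i > 0"
    and same: "\<forall>i<n. \<forall>j<n. x i = x j \<longrightarrow> a i = a j"
  shows "\<forall>i<n. x i - a i = (\<Sum>j<n. r j *\<^sub>R aligned_dual \<mu> x i j)"
proof (intro allI impI)
  fix i assume i: "i < n"
  define L where "L = {j. j < n \<and> x j = x i}"
  have "i \<in> L" "L \<subseteq> {..<n}"
    using i by (auto simp: L_def)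
  then have "rprime r L > 0"
    by (intro rprime_pos[OF rpos]) auto
  moreover have "\<forall>j\<in>L. a j = a i"
  proof
    fix j assume "j \<in> L"
    then have "j < n" "x j = x i"
      by (simp_all add: L_def)
    then show "a j = a i"
      using same i by blast
  qed
  ultimately have "abar r a L = a i"
    by (intro abar_const)
  then have "(\<Sum>j\<in>L. r j *\<^sub>R anti d i j) = 0"
    using certificate_level_set_balance[OF cert rpos i L_def] by simp
  moreover have "(\<Sum>j\<in>{..<n} - L. r j *\<^sub>R aligned_dual \<mu> x i j) = (\<Sum>j<n. r j *\<^sub>R aligned_dual \<mu> x i j)"
    by (intro sum.mono_neutral_left) (auto simp: L_def aligned_dual_eq_0)
  ultimately show "x i - a i = (\<Sum>j<n. r j *\<^sub>R aligned_dual \<mu> x i j)"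
    using certificate_flow_split[OF cert i L_def] by simp
qed

lemma certificate_of_reduced_solution:
  fixes a :: "nat \<Rightarrow> 'a::euclidean_space"
  assumes part: "indexed_partition K C n" and \<mu>: "\<mu> \<ge> 0"
    and dp_bound: "\<forall>k<K. \<forall>i\<in>C k. \<forall>j\<in>C k. i < j \<longrightarrow> norm (dp i j) \<le> \<mu>"
    and dp_eq: "\<forall>k<K. \<forall>i\<in>C k. a i - abar r a (C k) = - (\<Sum>j\<in>C k. r j *\<^sub>R anti dp i j)"
    and reduced: "\<forall>k<K. xh k - abar r a (C k) = (\<Sum>k'<K. rprime r (C k') *\<^sub>R aligned_dual \<mu> xh k k')"
    and x: "\<forall>k<K. \<forall>i\<in>C k. x i = xh k"
    and d: "d = (\<lambda>i j. if \<exists>k<K. i \<in> C k \<and> j \<in> C k then dp i j else aligned_dual \<mu> x i j)"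
  shows "certificate n r a \<mu> d x"
proof (rule certificate_glue[OF part dp_bound dp_eq, where e="aligned_dual \<mu> xh" and xh=xh])
  show "\<forall>k<K. \<forall>k'<K. k \<noteq> k' \<longrightarrow> norm (aligned_dual \<mu> xh k k') \<le> \<mu> \<and>
      \<mu> * norm (xh k' - xh k) \<le> aligned_dual \<mu> xh k k' \<bullet> (xh k' - xh k)"
    using \<mu> by (simp add: norm_aligned_dual_le aligned_dual_inner)
  show "\<forall>k<K. aligned_dual \<mu> xh k k = 0"
    by (simp add: aligned_dual_eq_0)
  show "\<forall>k<K. xh k - abar r a (C k) = (\<Sum>k'<K. rprime r (C k') *\<^sub>R aligned_dual \<mu> xh k k')"
    by (rule reduced)
  show "\<forall>k<K. \<forall>i\<in>C k. x i = xh k"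
    by (rule x)
  show "\<forall>k<K. \<forall>i\<in>C k. \<forall>j\<in>C k. d i j = dp i j"
  proof (intro allI impI ballI)
    fix k i j assume "k < K" "i \<in> C k" "j \<in> C k"
    then have "\<exists>k<K. i \<in> C k \<and> j \<in> C k"
      by blast
    then show "d i j = dp i j"
      unfolding d by simp
  qed
  show "\<forall>k<K. \<forall>k'<K. k \<noteq> k' \<longrightarrow> (\<forall>i\<in>C k. \<forall>j\<in>C k'. anti d i j = aligned_dual \<mu> xh k k')"
  proof (intro allI impI ballI)
    fix k k' i j
    assume k: "k < K" "k' < K" "k \<noteq> k'" "i \<in> C k" "j \<in> C k'"
    then have apart: "\<not> (\<exists>k''<K. i \<in> C k'' \<and> j \<in> C k'')" "\<not> (\<exists>k''<K. j \<in> C k'' \<and> i \<in> C k'')"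
        "i \<noteq> j"
      using partition_unique[OF part] by blast+
    then have "d i j = aligned_dual \<mu> x i j" "d j i = aligned_dual \<mu> x j i"
      by (simp_all only: d if_False)
    then have "anti d i j = aligned_dual \<mu> x i j"
      using aligned_dual_swap[of \<mu> x j i] apart(3) by (simp add: anti_def)
    also have "\<dots> = aligned_dual \<mu> xh k k'"
      using x k by (simp add: aligned_dual_def)
    finally show "anti d i j = aligned_dual \<mu> xh k k'" .
  qed
qed

section \<open>Fusion values\<close>

lemma fusion_value_eq_Inf:
  assumes "fusion_value n r a \<mu>"
  shows "\<exists>i<n. \<exists>j<n. \<mu> = Inf {m. 0 \<le> m \<and> xstar n r a m i = xstar n r a m j}"
proof -
  obtain i j where ij: "i < n" "j < n" "xstar n r a \<mu> i = xstar n r a \<mu> j" and "\<mu> > 0"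
    and "\<forall>m. 0 \<le> m \<and> m < \<mu> \<longrightarrow> xstar n r a m i \<noteq> xstar n r a m j"
    using assms unfolding fusion_value_def by blast
  then have "Inf {m. 0 \<le> m \<and> xstar n r a m i = xstar n r a m j} = \<mu>"
    by (intro cInf_eq_minimum) (auto simp: not_less[symmetric])
  then show ?thesis
    using ij by metis
qed

lemma finite_fusion_values: "finite {\<mu>. fusion_value n r a \<mu>}"
proof (rule finite_subset)
  show "{\<mu>. fusion_value n r a \<mu>}
      \<subseteq> (\<lambda>(i, j). Inf {m. 0 \<le> m \<and> xstar n r a m i = xstar n r a m j}) ` ({..<n} \<times> {..<n})"
    using fusion_value_eq_Inf by fastforce
qed simp

lemma lam1_bounds:
  assumes "lam > 0"
  shows "0 \<le> lam1 n r a lam" "lam1 n r a lam < lam"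
proof -
  define FS where "FS = {\<mu>. fusion_value n r a \<mu> \<and> \<mu> < lam}"
  have "finite FS"
    unfolding FS_def using finite_fusion_values by (rule finite_subset[rotated]) auto
  have "\<forall>\<mu>\<in>FS. 0 < \<mu> \<and> \<mu> < lam"
    by (auto simp: FS_def fusion_value_def)
  then have "0 \<le> lam1 n r a lam \<and> lam1 n r a lam < lam"
    using Max_in[OF \<open>finite FS\<close>] assms unfolding lam1_def FS_def[symmetric]
    by (cases "FS = {}") (auto simp: less_imp_le)
  then show "0 \<le> lam1 n r a lam" "lam1 n r a lam < lam"
    by auto
qed

lemma fusion_value_le_lam1:
  assumes "fusion_value n r a \<mu>" "\<mu> < lam"
  shows "\<mu> \<le> lam1 n r a lam"
proof -
  define FS where "FS = {\<mu>. fusion_value n r a \<mu> \<and> \<mu> < lam}"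
  have "finite FS"
    unfolding FS_def using finite_fusion_values by (rule finite_subset[rotated]) auto
  moreover have "\<mu> \<in> FS"
    using assms by (simp add: FS_def)
  ultimately show ?thesis
    unfolding lam1_def FS_def[symmetric] by auto
qed

text \<open>Whatever fuses at a non-fusion value \<open>\<lambda>\<close> is already fused at \<open>\<lambda>\<^sub>1\<close>: the first parameter at
  which two points fuse is either \<open>0\<close> or a fusion value below \<open>\<lambda>\<close>, and fusions persist.\<close>
lemma xstar_fused_at_lam1:
  fixes a :: "nat \<Rightarrow> 'a::euclidean_space"
  assumes rpos: "\<forall>i<n. r i > 0" and lam: "lam > 0" and not_fusion: "\<not> fusion_value n r a lam"
    and ij: "i < n" "j < n" and fused: "xstar n r a lam i = xstar n r a lam j"
  shows "xstar n r a (lam1 n r a lam) i = xstar n r a (lam1 n r a lam) j"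
proof (cases "i = j")
  case False
  define E where "E = {m. 0 \<le> m \<and> xstar n r a m i = xstar n r a m j}"
  have "lam \<in> E" and bdd: "bdd_below E"
    using lam fused by (auto simp: E_def intro!: bdd_belowI[of _ 0])
  define \<mu>0 where "\<mu>0 = Inf E"
  have "\<mu>0 \<in> E"
    unfolding \<mu>0_def using closed_fusion_parameters[OF rpos ij] \<open>lam \<in> E\<close> bdd
    by (intro closed_contains_Inf) (auto simp: E_def)
  have first: "\<mu>0 \<le> m" if "m \<in> E" for m
    unfolding \<mu>0_def using that bdd by (rule cInf_lower)
  have "\<mu>0 \<le> lam1 n r a lam"
  proof (cases "\<mu>0 = 0")
    case False
    then have "fusion_value n r a \<mu>0"
      unfolding fusion_value_def using \<open>\<mu>0 \<in> E\<close> first ij \<open>i \<noteq> j\<close>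
      by (auto simp: E_def less_le_not_le)
    moreover from this have "\<mu>0 < lam"
      using first[OF \<open>lam \<in> E\<close>] not_fusion by (auto simp: order.order_iff_strict)
    ultimately show ?thesis
      by (rule fusion_value_le_lam1)
  qed (simp add: lam1_bounds[OF lam])
  moreover have "0 \<le> \<mu>0" "xstar n r a \<mu>0 i = xstar n r a \<mu>0 j"
    using \<open>\<mu>0 \<in> E\<close> by (simp_all add: E_def)
  ultimately show ?thesis
    using xstar_fused_mono[OF rpos _ _ ij] by blast
qed simp

lemma abar_singleton: "r i > 0 \<Longrightarrow> abar r a {i} = a i"
  by (simp add: abar_def rprime_def)

lemma cluster_means_eq_if_fused:
  fixes a :: "nat \<Rightarrow> 'a::euclidean_space" and K :: nat
  assumes rpos: "\<forall>i<n. r i > 0" and lam: "lam > 0" and not_fusion: "\<not> fusion_value n r a lam"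
    and C: "bij_betw C {..<K} (clusters n r a (lam1 n r a lam))"
    and xstar_C: "\<forall>k<K. \<forall>i\<in>C k. xstar n r a lam i = xh k"
  shows "\<forall>k<K. \<forall>k'<K. xh k = xh k' \<longrightarrow> abar r a (C k) = abar r a (C k')"
proof (intro allI impI)
  fix k k' assume k: "k < K" and k': "k' < K" and "xh k = xh k'"
  note part = clusters_partition(1)[OF C]
  obtain i j where "i \<in> C k" "j \<in> C k'"
    using partition_nonempty[OF part] k k' by blast
  then have ij: "i < n" "j < n" and "xstar n r a lam i = xstar n r a lam j"
    using partition_subset[OF part] k k' xstar_C \<open>xh k = xh k'\<close> by auto
  then have fused1: "xstar n r a (lam1 n r a lam) i = xstar n r a (lam1 n r a lam) j"
    by (rule xstar_fused_at_lam1[OF rpos lam not_fusion])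
  show "abar r a (C k) = abar r a (C k')"
  proof (cases "lam1 n r a lam = 0")
    case True
    then have "a i = a j"
      using fused1 xstar_zero[OF rpos, where a=a] ij by simp
    moreover have "C k = {i}" "C k' = {j}"
      using clusters_partition(2)[OF C True] k k' \<open>i \<in> C k\<close> \<open>j \<in> C k'\<close> by blast+
    ultimately show ?thesis
      using rpos ij by (simp add: abar_singleton)
  next
    case False
    then have "j \<in> C k"
      using clusters_partition(3)[OF C False k \<open>i \<in> C k\<close>] fused1 ij by simp
    then have "k = k'"
      by (rule partition_unique[OF part k k' _ \<open>j \<in> C k'\<close>])
    then show ?thesis
      by simp
  qed
qed

section \<open>Second-order cone duality\<close>

lemma socp_cone_ineq:
  fixes z b :: "'a::euclidean_space"
  assumes "s = u + 1" "norm (z, u) \<le> s" "norm (b, g) \<le> 1 - g"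
  shows "g - z \<bullet> b \<le> s"
proof -
  have "\<bar>(z, u) \<bullet> (b, g)\<bar> \<le> norm (z, u) * norm (b, g)"
    by (rule Cauchy_Schwarz_ineq2)
  also have "\<dots> \<le> s * (1 - g)"
    using assms(2,3) by (intro mult_mono) (auto intro: order_trans[OF norm_ge_zero])
  finally have "- (s * (1 - g)) \<le> z \<bullet> b + u * g"
    by (simp add: inner_Pair)
  then show ?thesis
    using assms(1) by (simp add: algebra_simps)
qed

lemma neg_inner_flow_le_penalty:
  assumes rpos: "\<forall>i<n. r i > 0" and "lam \<ge> 0"
    and bound: "\<forall>i<n. \<forall>j<n. i < j \<longrightarrow> norm (d i j) \<le> lam \<and> norm (x i - x j) \<le> t i j"
  shows "- (\<Sum>i<n. r i * (x i \<bullet> flow n r d i)) \<le> lam * (\<Sum>i<n. \<Sum>j\<in>{i<..<n}. r i * r j * t i j)"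
proof -
  have "(\<Sum>i<n. \<Sum>j\<in>{i<..<n}. r i * r j * (- (lam * t i j)))
      \<le> (\<Sum>i<n. \<Sum>j\<in>{i<..<n}. r i * r j * (d i j \<bullet> (x i - x j)))"
  proof (intro sum_mono mult_left_mono)
    fix i j assume "i \<in> {..<n}" "j \<in> {i<..<n}"
    then have ij: "i < n" "j < n" "i < j"
      by auto
    then have "norm (d i j) \<le> lam" "lam * norm (x i - x j) \<le> lam * t i j"
      using bound \<open>lam \<ge> 0\<close> by (auto intro: mult_left_mono)
    then show "- (lam * t i j) \<le> d i j \<bullet> (x i - x j)"
      using neg_mult_norm_le_inner[of "d i j" lam "x i - x j"] by linarith
    have "r i > 0" "r j > 0"
      using rpos ij by auto
    then show "0 \<le> r i * r j"
      by simp
  qed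
  then show ?thesis
    by (simp add: inner_flow_sum sum_distrib_left sum_negf algebra_simps)
qed

lemma socp_weak_duality:
  fixes a :: "nat \<Rightarrow> 'a::euclidean_space"
  assumes rpos: "\<forall>i<n. r i > 0" and "lam \<ge> 0"
    and primal: "psocp_feasible n a x y z s u t" and dual: "dsocp_feasible n r lam d b g"
  shows "dsocp_obj n r a b g \<le> psocp_obj n r lam s t"
proof -
  have b: "b i = - flow n r d i" and a: "a i = x i - z i" if "i < n" for i
    using that primal dual unfolding psocp_feasible_def dsocp_feasible_def flow_def
    by (auto simp: add_eq_0_iff)
  have "(\<Sum>i<n. r i * (x i \<bullet> b i)) = - (\<Sum>i<n. r i * (x i \<bullet> flow n r d i))"
    using b by (simp add: sum_negf[symmetric])
  also have "\<dots> \<le> lam * (\<Sum>i<n. \<Sum>j\<in>{i<..<n}. r i * r j * t i j)"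
    using primal dual unfolding psocp_feasible_def dsocp_feasible_def
    by (intro neg_inner_flow_le_penalty[OF rpos \<open>lam \<ge> 0\<close>]) metis
  finally have pairing: "(\<Sum>i<n. r i * (x i \<bullet> b i)) \<le> lam * (\<Sum>i<n. \<Sum>j\<in>{i<..<n}. r i * r j * t i j)" .
  have cone: "(\<Sum>i<n. r i * (g i - z i \<bullet> b i)) \<le> (\<Sum>i<n. r i * s i)"
  proof (intro sum_mono mult_left_mono)
    fix i assume "i \<in> {..<n}"
    then have "s i = u i + 1" "norm (z i, u i) \<le> s i" "norm (b i, g i) \<le> 1 - g i"
      using primal dual unfolding psocp_feasible_def dsocp_feasible_def by blast+
    then show "g i - z i \<bullet> b i \<le> s i"
      by (rule socp_cone_ineq)
    show "0 \<le> r i"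
      using rpos \<open>i \<in> {..<n}\<close> by (simp add: less_imp_le)
  qed
  have "dsocp_obj n r a b g = (\<Sum>i<n. r i * (x i \<bullet> b i)) + (\<Sum>i<n. r i * (g i - z i \<bullet> b i))"
    unfolding dsocp_obj_def sum.distrib[symmetric]
  proof (intro sum.cong refl)
    fix i assume "i \<in> {..<n}"
    then have "a i \<bullet> b i = x i \<bullet> b i - z i \<bullet> b i"
      using a by (simp add: inner_diff_left)
    then show "r i * (a i \<bullet> b i) + r i * g i = r i * (x i \<bullet> b i) + r i * (g i - z i \<bullet> b i)"
      unfolding \<open>a i \<bullet> b i = _\<close> by (simp add: right_diff_distrib)
  qed
  then show ?thesis
    unfolding psocp_obj_def using pairing cone by linarith
qed

lemma norm_Pair_half_sq:
  fixes v :: "'a::real_normed_vector"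
  assumes "c\<^sup>2 = ((norm v)\<^sup>2 - 1)\<^sup>2 / 4"
  shows "norm (v, c) = ((norm v)\<^sup>2 + 1) / 2"
proof -
  have "(norm v)\<^sup>2 + c\<^sup>2 = (((norm v)\<^sup>2 + 1) / 2)\<^sup>2"
    using assms by (simp add: power2_eq_square field_simps)
  then show ?thesis
    by (simp add: norm_Pair norm_Pair add_nonneg_pos)
qed

lemma certificate_pairing:
  assumes "certificate n r a \<mu> d x" "i < n" "j < n" "i < j"
  shows "d i j \<bullet> (x i - x j) = - (\<mu> * norm (x i - x j))"
proof -
  have "norm (d i j) \<le> \<mu>" "\<mu> * norm (x j - x i) \<le> d i j \<bullet> (x j - x i)"
    using assms unfolding certificate_def by auto
  moreover have "d i j \<bullet> (x j - x i) \<le> norm (d i j) * norm (x j - x i)"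
    by (rule norm_cauchy_schwarz)
  ultimately have "d i j \<bullet> (x j - x i) = \<mu> * norm (x j - x i)"
    using mult_right_mono[of "norm (d i j)" \<mu> "norm (x j - x i)"] by simp
  then show ?thesis
    by (simp add: inner_diff_right norm_minus_commute)
qed

lemma certificate_inner_sum:
  assumes cert: "certificate n r a \<mu> d x"
  shows "(\<Sum>i<n. r i * (x i \<bullet> (x i - a i))) = - (\<mu> * pair_penalty n r x)"
proof -
  have "(\<Sum>i<n. r i * (x i \<bullet> (x i - a i))) = (\<Sum>i<n. r i * (x i \<bullet> flow n r d i))"
    using cert unfolding certificate_def by (intro sum.cong) auto
  also have "\<dots> = (\<Sum>i<n. \<Sum>j\<in>{i<..<n}. r i * r j * (d i j \<bullet> (x i - x j)))"
    by (rule inner_flow_sum)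
  also have "\<dots> = (\<Sum>i<n. \<Sum>j\<in>{i<..<n}. - (\<mu> * (r i * r j * norm (x i - x j))))"
  proof (intro sum.cong refl)
    fix i j assume "i \<in> {..<n}" "j \<in> {i<..<n}"
    then show "r i * r j * (d i j \<bullet> (x i - x j)) = - (\<mu> * (r i * r j * norm (x i - x j)))"
      using certificate_pairing[OF cert, of i j] by simp
  qed
  finally show ?thesis
    by (simp add: pair_penalty_def sum_distrib_left sum_negf)
qed

text \<open>With \<open>\<beta> = -z\<close> both cone constraints are tight, and the duality gap is
  \<open>\<Sum>\<^sub>i r\<^sub>i x\<^sub>i \<bullet> z\<^sub>i + \<mu> \<Sum>\<^sub>i\<^sub><\<^sub>j r\<^sub>i r\<^sub>j \<parallel>x\<^sub>i - x\<^sub>j\<parallel>\<close>, which vanishes at a certified point.\<close>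
lemma socp_optimal_of_certificate:
  fixes a :: "nat \<Rightarrow> 'a::euclidean_space"
  assumes rpos: "\<forall>i<n. r i > 0" and "lam \<ge> 0" and cert: "certificate n r a lam d x"
  shows "psocp_optimal n r a lam x (\<lambda>i j. x i - x j) (\<lambda>i. x i - a i)
      (\<lambda>i. (1/2) * (1 + (norm (x i - a i))\<^sup>2)) (\<lambda>i. (1/2) * (-1 + (norm (x i - a i))\<^sup>2))
      (\<lambda>i j. norm (x i - x j))
    \<and> dsocp_optimal n r a lam d (\<lambda>i. - (x i - a i)) (\<lambda>i. (1/2) * (1 - (norm (- (x i - a i)))\<^sup>2))"
    (is "psocp_optimal n r a lam x ?y ?z ?s ?u ?t \<and> dsocp_optimal n r a lam d ?b ?g")
proof -
  have "norm (?z i, ?u i) = ?s i" and dual_cone: "norm (?b i, ?g i) = 1 - ?g i" for i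
    by (simp_all add: norm_Pair_half_sq power2_eq_square field_simps)
  then have primal: "psocp_feasible n a x ?y ?z ?s ?u ?t"
    unfolding psocp_feasible_def by (simp add: algebra_simps)
  have dual: "dsocp_feasible n r lam d ?b ?g"
    unfolding dsocp_feasible_def
  proof (intro conjI allI impI)
    fix i assume "i < n"
    then show "(\<Sum>j<n. r j *\<^sub>R anti d i j) + ?b i = 0"
      using cert unfolding certificate_def flow_def by simp
    show "norm (?b i, ?g i) \<le> 1 - ?g i"
      by (simp only: dual_cone order_refl)
  next
    fix i j assume "i < n" "j < n" "i < j"
    then show "norm (d i j) \<le> lam"
      using cert unfolding certificate_def by blast
  qed
  have "r i * ?s i - r i * (a i \<bullet> ?b i) - r i * ?g i = r i * (x i \<bullet> (x i - a i))" for i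
    by (simp add: power2_norm_eq_inner inner_diff_left inner_diff_right inner_commute algebra_simps)
  then have "(\<Sum>i<n. r i * ?s i) - (\<Sum>i<n. r i * (a i \<bullet> ?b i)) - (\<Sum>i<n. r i * ?g i)
      = (\<Sum>i<n. r i * (x i \<bullet> (x i - a i)))"
    by (simp only: sum_subtractf[symmetric])
  then have gap: "psocp_obj n r lam ?s ?t = dsocp_obj n r a ?b ?g"
    using certificate_inner_sum[OF cert] unfolding psocp_obj_def dsocp_obj_def pair_penalty_def
    by linarith
  show ?thesis
    unfolding psocp_optimal_def dsocp_optimal_def
  proof (intro conjI allI impI primal dual)
    fix x' z' :: "nat \<Rightarrow> 'a" and y' :: "nat \<Rightarrow> nat \<Rightarrow> 'a" and s' u' :: "nat \<Rightarrow> real"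
      and t' :: "nat \<Rightarrow> nat \<Rightarrow> real"
    assume "psocp_feasible n a x' y' z' s' u' t'"
    then show "psocp_obj n r lam ?s ?t \<le> psocp_obj n r lam s' t'"
      using socp_weak_duality[OF rpos \<open>lam \<ge> 0\<close> _ dual] gap by simp
  next
    fix d' :: "nat \<Rightarrow> nat \<Rightarrow> 'a" and b' :: "nat \<Rightarrow> 'a" and g' :: "nat \<Rightarrow> real"
    assume "dsocp_feasible n r lam d' b' g'"
    then show "dsocp_obj n r a b' g' \<le> dsocp_obj n r a ?b ?g"
      using socp_weak_duality[OF rpos \<open>lam \<ge> 0\<close> primal] gap by simp
  qed
qed

lemma Robj_eq_Pobj: "Robj r a C K lam x = Pobj K (\<lambda>k. rprime r (C k)) (\<lambda>k. abar r a (C k)) lam x"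
  by (simp add: Robj_def Pobj_def)

lemma reduced_minimizer_certificate:
  fixes a :: "nat \<Rightarrow> 'a::euclidean_space"
  assumes rpos: "\<forall>i<n. r i > 0" and lam: "lam \<ge> 0" and part: "indexed_partition K C n"
    and dp_bound: "\<forall>k<K. \<forall>i\<in>C k. \<forall>j\<in>C k. i < j \<longrightarrow> norm (dp i j) \<le> lam"
    and dp_eq: "\<forall>k<K. \<forall>i\<in>C k. a i - abar r a (C k) = - (\<Sum>j\<in>C k. r j *\<^sub>R anti dp i j)"
    and xh_min: "\<forall>x. Robj r a C K lam xh \<le> Robj r a C K lam x"
  obtains dR where "certificate K (\<lambda>k. rprime r (C k)) (\<lambda>k. abar r a (C k)) lam dR xh"
    and "\<forall>k<K. \<forall>i\<in>C k. xstar n r a lam i = xh k"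
proof -
  note r'pos = partition_rprime_pos[OF rpos part]
  obtain dR xR where reduced: "certificate K (\<lambda>k. rprime r (C k)) (\<lambda>k. abar r a (C k)) lam dR xR"
    by (rule certificate_exists[OF lam r'pos])
  have xh: "\<forall>k<K. xh k = xR k"
    using certificate_minimizer_unique[OF reduced r'pos] xh_min by (simp add: Robj_eq_Pobj)
  show ?thesis
  proof (rule that)
    show "certificate K (\<lambda>k. rprime r (C k)) (\<lambda>k. abar r a (C k)) lam dR xh"
      using reduced certificate_cong[of K xh xR] xh by simp
    show "\<forall>k<K. \<forall>i\<in>C k. xstar n r a lam i = xh k"
      using xstar_on_clusters[OF rpos part dp_bound dp_eq reduced] xh by simp
  qed
qed

theorem lemma6p4:
  fixes n K :: nat and r :: "nat \<Rightarrow> real" and a :: "nat \<Rightarrow> 'a::euclidean_space"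
    and lam :: real and C :: "nat \<Rightarrow> nat set" and xh :: "nat \<Rightarrow> 'a"
    and dp :: "nat \<Rightarrow> nat \<Rightarrow> 'a"
    and xs z beta :: "nat \<Rightarrow> 'a" and y delta :: "nat \<Rightarrow> nat \<Rightarrow> 'a"
    and s u gamma :: "nat \<Rightarrow> real" and t :: "nat \<Rightarrow> nat \<Rightarrow> real"
  assumes n2: "n \<ge> 2"
    and rpos: "\<forall>i<n. r i > 0"
    and lampos: "lam > 0"
    and notfus: "\<not> fusion_value n r a lam"
    and C: "bij_betw C {..<K} (clusters n r a (lam1 n r a lam))"
    and xh_min: "\<forall>x. Robj r a C K lam xh \<le> Robj r a C K lam x"
    and dp_bound: "\<forall>k<K. \<forall>i\<in>C k. \<forall>j\<in>C k. i < j \<longrightarrow> norm (dp i j) \<le> lam1 n r a lam"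
    and dp_eq: "\<forall>k<K. \<forall>i\<in>C k. a i - abar r a (C k) = - (\<Sum>j\<in>C k. r j *\<^sub>R anti dp i j)"
    and xs_def: "\<forall>k<K. \<forall>i\<in>C k. xs i = xh k"
    and y_def: "y = (\<lambda>i j. xs i - xs j)"
    and z_def: "z = (\<lambda>i. xs i - a i)"
    and s_def: "s = (\<lambda>i. (1/2) * (1 + (norm (z i))\<^sup>2))"
    and u_def: "u = (\<lambda>i. (1/2) * (-1 + (norm (z i))\<^sup>2))"
    and t_def: "t = (\<lambda>i j. norm (y i j))"
    and delta_def: "delta = (\<lambda>i j. if (\<exists>k<K. i \<in> C k \<and> j \<in> C k) then dp i j
                       else lam *\<^sub>R ((1 / norm (xs j - xs i)) *\<^sub>R (xs j - xs i)))"
    and beta_def: "beta = (\<lambda>i. - z i)"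
    and gamma_def: "gamma = (\<lambda>i. (1/2) * (1 - (norm (beta i))\<^sup>2))"
  shows "psocp_optimal n r a lam xs y z s u t \<and> dsocp_optimal n r a lam delta beta gamma"
proof -
  note part = clusters_partition(1)[OF C]
  have "lam1 n r a lam \<le> lam"
    using lam1_bounds(2)[OF lampos, where n=n and r=r and a=a] by simp
  then have dp_bound': "\<forall>k<K. \<forall>i\<in>C k. \<forall>j\<in>C k. i < j \<longrightarrow> norm (dp i j) \<le> lam"
    using dp_bound by (meson order_trans)
  obtain dR where reduced: "certificate K (\<lambda>k. rprime r (C k)) (\<lambda>k. abar r a (C k)) lam dR xh"
    and xstar_C: "\<forall>k<K. \<forall>i\<in>C k. xstar n r a lam i = xh k"
    using reduced_minimizer_certificate[OF rpos less_imp_le[OF lampos] part dp_bound' dp_eq xh_min] .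
  have "\<forall>k<K. \<forall>k'<K. xh k = xh k' \<longrightarrow> abar r a (C k) = abar r a (C k')"
    by (rule cluster_means_eq_if_fused[OF rpos lampos notfus C xstar_C])
  then have "\<forall>k<K. xh k - abar r a (C k) = (\<Sum>k'<K. rprime r (C k') *\<^sub>R aligned_dual lam xh k k')"
    by (rule certificate_aligned_flow[OF reduced partition_rprime_pos[OF rpos part]])
  moreover have "delta = (\<lambda>i j. if \<exists>k<K. i \<in> C k \<and> j \<in> C k then dp i j else aligned_dual lam xs i j)"
    unfolding delta_def aligned_dual_def by (simp only: scaleR_scaleR times_divide_eq_right mult_1_right)
  ultimately have cert: "certificate n r a lam delta xs"
    using certificate_of_reduced_solution[OF part _ dp_bound' dp_eq _ xs_def] lampos by simp
  show ?thesis
    using socp_optimal_of_certificate[OF rpos _ cert] lampos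
    unfolding y_def z_def s_def u_def t_def beta_def gamma_def by simp
qed

end
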